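(* Let $k\ge2$ and let $\chi_1,\chi_2$ be characters of $F^\times$ with $a(\chi_1)=a(\chi_2)=k$. (1) If either $q>3$, or $q=3$ and $a(\chi_1\chi_2^{-1})<k$, then there exists $\mu\in\mathfrak X$ with $a(\mu)=a(\mu\chi_1)=a(\mu\chi_2)=k$. (2) If $q=3$ and $a(\chi_1\chi_2^{-1})=k$, then $\max\{a(\mu\chi_1)+a(\mu\chi_2):\mu\in\mathfrak X'_k\}=2k-1$. (3) If $q=2$ and $a(\chi_1\chi_2^{-1})<k-1$: if $k>2$ there exists $\mu\in\mathfrak X$ with $a(\mu)=k$ and $a(\mu\chi_1)=a(\mu\chi_2)=k-1$; if $k=2$ then every $\mu\in\mathfrak X$ with $a(\mu)=2$ satisfies $a(\mu\chi_1)=a(\mu\chi_2)=0$. (4) If $q=2$ and $a(\chi_1\chi_2^{-1})=k-1$, then $k\ge3$; if $k\ge4$ then $\max\{a(\mu\chi_1)+a(\mu\chi_2):\mu\in\mathfrak X'_k\}=2k-3$; if $k=3$ then every $\mu\in\mathfrak X$ with $a(\mu)=3$ satisfies $\{a(\mu\chi_1),a(\mu\chi_2)\}=\{2,0\}$.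
   Context: $F$ is a non-archimedean local field of characteristic $0$ with ring of integers $\mathfrak o$, maximal ideal $\mathfrak p$, uniformiser $\varpi$, and $q=\#(\mathfrak o/\mathfrak p)$. Put $U_0=\mathfrak o^\times$ and $U_k=1+\varpi^k\mathfrak o$ for $k\ge1$. For a continuous character $\chi$ of $F^\times$, $a(\chi)$ is the least integer $k\ge0$ with $\chi(U_k)=\{1\}$. $\mathfrak X$ denotes the group of characters $\mu$ of $F^\times$ with $\mu(\varpi)=1$, and $\mathfrak X'_k=\{\mu\in\mathfrak X:a(\mu)=k\}$. *)

theory Defs
  imports Complex_Main
begin

text \<open>A non-archimedean local field of characteristic 0 is modelled as a type
  'a of class field_char_0 together with a normalised discrete valuation
  v on the nonzero elements (values at 0 are irrelevant and never used),
  which is complete and has finite residue field.\<close>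

definition val_ring :: "('a::field \<Rightarrow> int) \<Rightarrow> 'a set" where
  "val_ring v = {x. x = 0 \<or> v x \<ge> 0}"

definition val_ideal :: "('a::field \<Rightarrow> int) \<Rightarrow> 'a set" where
  "val_ideal v = {x. x = 0 \<or> v x \<ge> 1}"

definition residue_field :: "('a::field \<Rightarrow> int) \<Rightarrow> 'a set set" where
  "residue_field v = val_ring v // {(x, y). x \<in> val_ring v \<and> y \<in> val_ring v \<and> x - y \<in> val_ideal v}"

definition resq :: "('a::field \<Rightarrow> int) \<Rightarrow> nat" where
  "resq v = card (residue_field v)"

definition val_cauchy :: "('a::field \<Rightarrow> int) \<Rightarrow> (nat \<Rightarrow> 'a) \<Rightarrow> bool" where
  "val_cauchy v s \<longleftrightarrow> (\<forall>N::int. \<exists>M. \<forall>m\<ge>M. \<forall>n\<ge>M. s m = s n \<or> v (s m - s n) \<ge> N)"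

definition val_converges :: "('a::field \<Rightarrow> int) \<Rightarrow> (nat \<Rightarrow> 'a) \<Rightarrow> bool" where
  "val_converges v s \<longleftrightarrow> (\<exists>L. \<forall>N::int. \<exists>M. \<forall>n\<ge>M. s n = L \<or> v (s n - L) \<ge> N)"

definition local_field :: "('a::field_char_0 \<Rightarrow> int) \<Rightarrow> bool" where
  "local_field v \<longleftrightarrow>
     (\<forall>x y. x \<noteq> 0 \<longrightarrow> y \<noteq> 0 \<longrightarrow> v (x * y) = v x + v y) \<and>
     (\<forall>x y. x \<noteq> 0 \<longrightarrow> y \<noteq> 0 \<longrightarrow> x + y \<noteq> 0 \<longrightarrow> v (x + y) \<ge> min (v x) (v y)) \<and>
     (\<exists>w. w \<noteq> 0 \<and> v w = 1) \<and>
     (\<forall>s. val_cauchy v s \<longrightarrow> val_converges v s) \<and>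
     finite (residue_field v)"

definition unitU :: "('a::field \<Rightarrow> int) \<Rightarrow> nat \<Rightarrow> 'a set" where
  "unitU v k = (if k = 0 then {x. x \<noteq> 0 \<and> v x = 0}
                else {x. x = 1 \<or> (x \<noteq> 0 \<and> x \<noteq> 1 \<and> v (x - 1) \<ge> int k)})"

definition is_char :: "('a::field \<Rightarrow> int) \<Rightarrow> ('a \<Rightarrow> complex) \<Rightarrow> bool" where
  "is_char v \<chi> \<longleftrightarrow>
     (\<forall>x y. x \<noteq> 0 \<longrightarrow> y \<noteq> 0 \<longrightarrow> \<chi> (x * y) = \<chi> x * \<chi> y) \<and>
     (\<forall>x. x \<noteq> 0 \<longrightarrow> \<chi> x \<noteq> 0) \<and>
     (\<forall>x. x \<noteq> 0 \<longrightarrow> (\<forall>\<epsilon>>0. \<exists>N::int. \<forall>y. y \<noteq> 0 \<longrightarrow> (y = x \<or> v (y - x) \<ge> N)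
          \<longrightarrow> cmod (\<chi> y - \<chi> x) < \<epsilon>))"

definition cond :: "('a::field \<Rightarrow> int) \<Rightarrow> ('a \<Rightarrow> complex) \<Rightarrow> nat" where
  "cond v \<chi> = (LEAST k. \<forall>u\<in>unitU v k. \<chi> u = 1)"

definition charX :: "('a::field \<Rightarrow> int) \<Rightarrow> 'a \<Rightarrow> ('a \<Rightarrow> complex) set" where
  "charX v \<pi> = {\<mu>. is_char v \<mu> \<and> \<mu> \<pi> = 1}"

definition charX' :: "('a::field \<Rightarrow> int) \<Rightarrow> 'a \<Rightarrow> nat \<Rightarrow> ('a \<Rightarrow> complex) set" where
  "charX' v \<pi> k = {\<mu> \<in> charX v \<pi>. cond v \<mu> = k}"

end

theory Submission
  imports Defs
begin

(*
  A character trivial on U_k is a character of F^x / \<pi>^Z U_k, and on U_{k-1} it only depends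
  on the class in U_{k-1} / U_k, a group with q elements (it embeds into the residue field via
  u \<mapsto> (u - 1) / \<pi>^{k-1}). Since C^x is divisible, characters of finite index subgroups
  extend to F^x, so the characters of level k separate the q classes of U_{k-1} / U_k.

  (1) If no \<mu> of level k kept all three conductors equal to k, every such \<mu> would restrict to
  U_{k-1} as 1, chi_1^{-1} or chi_2^{-1}. A multiplicatively closed family with at most three such
  restrictions (two if chi_1 = chi_2 on U_{k-1}) is cyclic of order at most three and separates
  at most that many points, contradicting q > 3 (resp. q = 3).
  (2) For q = 3, U_{k-1} / U_k is cyclic of order 3; the values of \<mu>, chi_1, chi_2 at a
  generator are primitive cube roots of unity with chi_1 \<noteq> chi_2 there, so \<mu> chi_i is 1
  at the generator for some i, i.e. a(\<mu> chi_i) < k.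
  (3), (4) For q = 2, a character of conductor j + 1 \<ge> 2 is -1 on U_j - U_{j+1}, so a product
  of two of them has conductor \<le> j, and U_0 = U_1 leaves no conductor 1. Applied to \<mu> chi_1
  and (\<mu> chi_2)^{-1}, whose product is chi_1 / chi_2 on units, this bounds the sums.

  The bounds are attained by twists \<mu> = \<sigma> / chi_i of characters \<sigma> of suitable conductor,
  because a(f g) = max (a f) (a g) whenever a f \<noteq> a g.
*)

section \<open>No small subgroups in \<open>\<complex>\<^sup>\<times>\<close>\<close>

lemma cos_le_half:
  assumes "pi / 3 \<le> a" "a \<le> 4 * pi / 3"
  shows "cos a \<le> 1 / 2"
proof (cases "a \<le> pi")
  case True
  then have "cos a \<le> cos (pi / 3)"
    using assms by (intro cos_monotone_0_pi_le) auto
  then show ?thesis by (simp add: cos_60)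
next
  case False
  have "cos a = - cos (a - pi)"
    using cos_periodic_pi[of "a - pi"] by simp
  moreover have "cos (a - pi) \<ge> 0"
    using False assms by (intro cos_ge_zero) auto
  ultimately show ?thesis by simp
qed

lemma norm_cis_minus_one_squared: "(cmod (cis a - 1))\<^sup>2 = 2 - 2 * cos a"
proof -
  have "(cmod (cis a - 1))\<^sup>2 = (cos a - 1)\<^sup>2 + (sin a)\<^sup>2"
    by (simp add: cmod_def cis.code)
  also have "\<dots> = 2 - 2 * cos a"
    using sin_cos_squared_add[of a] by (simp add: power2_eq_square algebra_simps)
  finally show ?thesis .
qed

lemma exists_power_cis_far_from_one:
  assumes "0 < t" "t \<le> pi"
  shows "\<exists>m::nat. 1 \<le> cmod (cis t ^ m - 1)"
proof -
  \<comment> \<open>the first multiple of \<open>t\<close> beyond \<open>\<pi>/3\<close> lies in \<open>[\<pi>/3, 4\<pi>/3]\<close>\<close>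
  define m where "m = nat \<lceil>(pi / 3) / t\<rceil>"
  have p: "(pi / 3) / t > 0" using assms by simp
  have m: "real m \<ge> (pi / 3) / t" "real m < (pi / 3) / t + 1"
    unfolding m_def using p by linarith+
  have lo: "pi / 3 \<le> real m * t"
    using m(1) assms by (simp add: field_simps)
  have "real m * t < ((pi / 3) / t + 1) * t"
    using m(2) assms by (intro mult_strict_right_mono) auto
  also have "\<dots> = pi / 3 + t"
    using assms by (simp add: field_simps)
  finally have hi: "real m * t \<le> 4 * pi / 3"
    using assms by simp
  have "cos (real m * t) \<le> 1 / 2"
    using lo hi by (rule cos_le_half)
  then have "1 \<le> (cmod (cis (real m * t) - 1))\<^sup>2"
    by (simp add: norm_cis_minus_one_squared)
  then have "1 \<le> cmod (cis (real m * t) - 1)"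
    using power2_le_imp_le[of 1 "cmod (cis (real m * t) - 1)"] by simp
  then show ?thesis by (auto simp: DeMoivre)
qed

lemma norm_le_one_if_powers_near_one:
  fixes w :: complex
  assumes "\<And>m. cmod (w ^ m - 1) < 1"
  shows "cmod w \<le> 1"
proof (rule ccontr)
  assume "\<not> cmod w \<le> 1"
  then obtain m where "2 < cmod w ^ m"
    using real_arch_pow by fastforce
  moreover have "cmod (w ^ m) - cmod 1 \<le> cmod (w ^ m - 1)"
    by (rule norm_triangle_ineq2)
  ultimately have "1 < cmod (w ^ m - 1)"
    by (simp add: norm_power)
  with assms show False by (metis not_less_iff_gr_or_eq)
qed

lemma eq_one_if_powers_near_one:
  fixes z :: complex
  assumes z: "z \<noteq> 0"
    and near: "\<And>m. cmod (z ^ m - 1) < 1" "\<And>m. cmod (inverse z ^ m - 1) < 1"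
  shows "z = 1"
proof -
  have "cmod z \<le> 1" "cmod (inverse z) \<le> 1"
    using norm_le_one_if_powers_near_one near by blast+
  moreover have "cmod (inverse z) = 1 / cmod z"
    by (simp add: norm_inverse divide_inverse)
  moreover have "cmod z > 0"
    using z by simp
  ultimately have norm1: "cmod z = 1"
    by (simp add: field_simps)
  define t where "t = Arg z"
  have zt: "z = cis t"
    unfolding t_def using z norm1 by (simp add: cis_Arg sgn_div_norm)
  have t: "- pi < t" "t \<le> pi"
    unfolding t_def using Arg_bounded by auto
  show ?thesis
  proof (rule ccontr)
    assume "z \<noteq> 1"
    then have "t \<noteq> 0" using zt by auto
    then consider "0 < t" | "0 < - t" by linarith
    then show False
    proof cases
      case 1
      then obtain m where "1 \<le> cmod (cis t ^ m - 1)"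
        using exists_power_cis_far_from_one t by blast
      then show False using near(1)[of m] zt by simp
    next
      case 2
      then obtain m where "1 \<le> cmod (cis (- t) ^ m - 1)"
        using exists_power_cis_far_from_one[of "- t"] 2 t by auto
      then show False using near(2)[of m] zt by (simp add: cis_inverse)
    qed
  qed
qed

section \<open>Extending homomorphisms into \<open>\<complex>\<^sup>\<times>\<close>\<close>

definition mult_subgroup :: "'a::field set \<Rightarrow> bool" where
  "mult_subgroup K \<longleftrightarrow> 1 \<in> K \<and> 0 \<notin> K \<and> (\<forall>x\<in>K. \<forall>y\<in>K. x * y \<in> K) \<and> (\<forall>x\<in>K. inverse x \<in> K)"

definition hom_on :: "'a::field set \<Rightarrow> ('a \<Rightarrow> complex) \<Rightarrow> bool" where
  "hom_on K f \<longleftrightarrow> (\<forall>x\<in>K. \<forall>y\<in>K. f (x * y) = f x * f y) \<and> (\<forall>x\<in>K. f x \<noteq> 0)"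

definition torsion_modulo :: "'a::field set \<Rightarrow> bool" where
  "torsion_modulo K \<longleftrightarrow> (\<forall>x. x \<noteq> 0 \<longrightarrow> (\<exists>d>0. x ^ d \<in> K))"

lemma mult_subgroup_nonzero: "mult_subgroup (- {0 :: 'a::field})"
  by (simp add: mult_subgroup_def)

lemma mult_subgroup_power:
  "mult_subgroup K \<Longrightarrow> x \<in> K \<Longrightarrow> x ^ n \<in> K"
  by (induction n) (auto simp: mult_subgroup_def)

lemma mult_subgroup_power_int:
  assumes "mult_subgroup K" "x \<in> K"
  shows "x powi n \<in> K"
  using assms mult_subgroup_power[of K] by (auto simp: power_int_def mult_subgroup_def)

lemma mult_subgroup_divide:
  "mult_subgroup K \<Longrightarrow> x \<in> K \<Longrightarrow> y \<in> K \<Longrightarrow> x / y \<in> K"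
  by (simp add: mult_subgroup_def divide_inverse)

lemma hom_on_one:
  assumes "mult_subgroup K" "hom_on K f"
  shows "f 1 = 1"
proof -
  have "f (1 * 1) = f 1 * f 1" "f 1 \<noteq> 0"
    using assms unfolding mult_subgroup_def hom_on_def by blast+
  then show ?thesis by simp
qed

lemma hom_on_inverse:
  assumes "mult_subgroup K" "hom_on K f" "x \<in> K"
  shows "f (inverse x) = inverse (f x)"
proof -
  have "x \<noteq> 0" "inverse x \<in> K"
    using assms(1,3) by (auto simp: mult_subgroup_def)
  then have "f x * f (inverse x) = 1"
    using assms hom_on_one[OF assms(1,2)] unfolding hom_on_def by (metis right_inverse)
  then show ?thesis by (simp add: inverse_unique)
qed

lemma hom_on_divide:
  assumes "mult_subgroup K" "hom_on K f" "x \<in> K" "y \<in> K"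
  shows "f (x / y) = f x / f y"
  using assms hom_on_inverse[OF assms(1,2,4)]
  by (simp add: divide_inverse hom_on_def mult_subgroup_def)

lemma hom_on_power:
  assumes "mult_subgroup K" "hom_on K f" "x \<in> K"
  shows "f (x ^ n) = f x ^ n"
proof (induction n)
  case 0
  then show ?case using hom_on_one[OF assms(1,2)] by simp
next
  case (Suc n)
  then show ?case
    using assms mult_subgroup_power[OF assms(1,3)] by (simp add: hom_on_def)
qed

lemma hom_on_power_int:
  assumes "mult_subgroup K" "hom_on K f" "x \<in> K"
  shows "f (x powi n) = f x powi n"
  using assms hom_on_power[OF assms] hom_on_power[OF assms(1,2), of "inverse x"]
    hom_on_inverse[OF assms]
  by (auto simp: power_int_def mult_subgroup_def)

text \<open>\<open>adjoined\<close> is \<open>K x\<^sup>\<int>\<close> and \<open>extension\<close> sends \<open>y x\<^sup>n\<close> to \<open>f y c\<^sup>n\<close>; \<open>compat\<close> makes this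
  well defined.\<close>

locale adjoin_root =
  fixes K :: "'a::field set" and f :: "'a \<Rightarrow> complex" and x :: 'a and c :: complex
  assumes subgroup: "mult_subgroup K" and hom: "hom_on K f" and x: "x \<noteq> 0" and c: "c \<noteq> 0"
    and compat: "\<And>n. x powi n \<in> K \<Longrightarrow> c powi n = f (x powi n)"
begin

definition adjoined :: "'a set" where
  "adjoined = {z. \<exists>n. z * x powi (- n) \<in> K}"

definition extension :: "'a \<Rightarrow> complex" where
  "extension z = c powi (SOME n. z * x powi (- n) \<in> K)
                   * f (z * x powi (- (SOME n. z * x powi (- n) \<in> K)))"

lemma zero_notin_K: "0 \<notin> K"
  using subgroup by (simp add: mult_subgroup_def)

lemma extension_eq:
  assumes zn: "z * x powi (- n) \<in> K"
  shows "extension z = c powi n * f (z * x powi (- n))"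
proof -
  define m where "m = (SOME n. z * x powi (- n) \<in> K)"
  have zm: "z * x powi (- m) \<in> K"
    unfolding m_def using zn by (rule someI)
  have "z \<noteq> 0" using zn zero_notin_K by auto
  then have "x powi (m - n) = (z * x powi (- n)) / (z * x powi (- m))"
    using x by (simp add: power_int_diff power_int_minus field_simps)
  then have "c powi (m - n) = f (z * x powi (- n)) / f (z * x powi (- m))"
    using compat hom_on_divide[OF subgroup hom zn zm] mult_subgroup_divide[OF subgroup zn zm]
    by metis
  moreover have "f (z * x powi (- m)) \<noteq> 0" using hom zm by (simp add: hom_on_def)
  ultimately have "c powi m * f (z * x powi (- m)) = c powi n * f (z * x powi (- n))"
    using c by (simp add: power_int_diff field_simps)
  then show ?thesis unfolding extension_def m_def by simp
qed

lemma shift_mult: "a * b * x powi (- (m + n)) = (a * x powi (- m)) * (b * x powi (- n))"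
  using power_int_add[of x "- m" "- n"] x by (simp add: algebra_simps)

lemma mult_subgroup_adjoined: "mult_subgroup adjoined"
  unfolding mult_subgroup_def
proof (intro conjI ballI)
  show "1 \<in> adjoined" using subgroup unfolding adjoined_def mult_subgroup_def by (auto intro: exI[of _ 0])
  show "0 \<notin> adjoined" using zero_notin_K unfolding adjoined_def by simp
next
  fix a b assume "a \<in> adjoined" "b \<in> adjoined"
  then obtain m n where "a * x powi (- m) \<in> K" "b * x powi (- n) \<in> K"
    unfolding adjoined_def by blast
  then have "a * b * x powi (- (m + n)) \<in> K"
    using subgroup unfolding shift_mult mult_subgroup_def by blast
  then show "a * b \<in> adjoined" unfolding adjoined_def by blast
next
  fix a assume "a \<in> adjoined"
  then obtain m where "a * x powi (- m) \<in> K" unfolding adjoined_def by blast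
  then have "inverse a * x powi (- (- m)) \<in> K"
    using subgroup unfolding mult_subgroup_def by (metis inverse_mult_distrib power_int_minus)
  then show "inverse a \<in> adjoined" unfolding adjoined_def by blast
qed

lemma hom_on_extension: "hom_on adjoined extension"
  unfolding hom_on_def
proof (intro conjI ballI)
  fix a b assume "a \<in> adjoined" "b \<in> adjoined"
  then obtain m n where mn: "a * x powi (- m) \<in> K" "b * x powi (- n) \<in> K"
    unfolding adjoined_def by blast
  then have "a * b * x powi (- (m + n)) \<in> K"
    using subgroup unfolding shift_mult mult_subgroup_def by blast
  then have "extension (a * b) = c powi (m + n) * f (a * b * x powi (- (m + n)))"
    by (rule extension_eq)
  also have "\<dots> = (c powi m * c powi n) * (f (a * x powi (- m)) * f (b * x powi (- n)))"
    using hom mn power_int_add[of c m n] c unfolding shift_mult hom_on_def by simp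
  also have "\<dots> = (c powi m * f (a * x powi (- m))) * (c powi n * f (b * x powi (- n)))"
    by (simp only: mult_ac)
  finally show "extension (a * b) = extension a * extension b"
    using mn by (simp only: extension_eq)
next
  fix a assume "a \<in> adjoined"
  then obtain m where "a * x powi (- m) \<in> K" unfolding adjoined_def by blast
  then show "extension a \<noteq> 0" using hom c by (simp add: extension_eq hom_on_def)
qed

lemma extension_extends: "K \<subseteq> adjoined" "\<forall>y\<in>K. extension y = f y"
  unfolding adjoined_def using extension_eq[of _ 0] by (auto intro: exI[of _ 0])

lemma extension_at_x: "x \<in> adjoined" "extension x = c"
  using extension_eq[of x 1] subgroup x hom_on_one[OF subgroup hom]
  unfolding adjoined_def mult_subgroup_def by (auto intro!: exI[of _ 1])

end

lemma hom_on_extend: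
  assumes "mult_subgroup K" "hom_on K f" "x \<noteq> 0" "c \<noteq> 0"
    and "\<And>n. x powi n \<in> K \<Longrightarrow> c powi n = f (x powi n)"
  shows "\<exists>K' f'. mult_subgroup K' \<and> hom_on K' f' \<and> K \<subseteq> K' \<and> x \<in> K'
           \<and> (\<forall>y\<in>K. f' y = f y) \<and> f' x = c"
proof -
  interpret adjoin_root K f x c
    using assms by unfold_locales
  show ?thesis
    using mult_subgroup_adjoined hom_on_extension extension_extends extension_at_x by blast
qed

lemma exponent_dvd_of_power_in_subgroup:
  assumes K: "mult_subgroup K" and x: "x \<noteq> 0" and d: "0 < d" "x ^ d \<in> K"
    and min: "\<And>e. 0 < e \<Longrightarrow> e < d \<Longrightarrow> x ^ e \<notin> K"
    and n: "x powi n \<in> K"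
  shows "int d dvd n"
proof -
  define r where "r = n mod int d"
  have r: "0 \<le> r" "r < int d" unfolding r_def using d by simp_all
  have "n = int d * (n div int d) + r" unfolding r_def by simp
  then have "x powi n = (x ^ d) powi (n div int d) * x powi r"
    using x by (metis power_int_add power_int_mult power_int_of_nat)
  then have "x powi r = x powi n / (x ^ d) powi (n div int d)"
    using x by (simp add: field_simps)
  then have "x powi r \<in> K"
    using mult_subgroup_divide[OF K n mult_subgroup_power_int[OF K d(2)]] by simp
  then have "x ^ nat r \<in> K"
    using r by (simp add: power_int_nonneg_exp)
  moreover have "nat r < d" using r by simp
  ultimately have "r = 0" using min[of "nat r"] r(1) by fastforce
  then show ?thesis unfolding r_def by (simp add: dvd_eq_mod_eq_0)
qed

lemma hom_on_extend_root:
  assumes K: "mult_subgroup K" and f: "hom_on K f" and x: "x \<noteq> 0"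
    and d: "0 < d" "x ^ d \<in> K" and min: "\<And>e. 0 < e \<Longrightarrow> e < d \<Longrightarrow> x ^ e \<notin> K"
    and c: "c ^ d = f (x ^ d)"
  shows "\<exists>K' f'. mult_subgroup K' \<and> hom_on K' f' \<and> K \<subseteq> K' \<and> x \<in> K'
           \<and> (\<forall>y\<in>K. f' y = f y) \<and> f' x = c"
proof (rule hom_on_extend[OF K f x])
  have "f (x ^ d) \<noteq> 0" using f d by (simp add: hom_on_def)
  then show "c \<noteq> 0" using c d(1) by (metis power_0_left not_gr0)
  fix n assume "x powi n \<in> K"
  then obtain t where n: "n = int d * t"
    using exponent_dvd_of_power_in_subgroup[OF K x d min] by blast
  have "c powi n = (c ^ d) powi t"
    unfolding n by (simp add: power_int_mult)
  also have "\<dots> = f ((x ^ d) powi t)"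
    using hom_on_power_int[OF K f d(2)] c by simp
  also have "\<dots> = f (x powi n)"
    unfolding n by (simp add: power_int_mult)
  finally show "c powi n = f (x powi n)" .
qed

lemma exists_nth_root:
  assumes "(c::complex) \<noteq> 0" "0 < n"
  shows "\<exists>z. z ^ n = c"
proof -
  have "card {z::complex. z ^ n = c} = n" using card_nth_roots[OF assms] .
  then have "{z::complex. z ^ n = c} \<noteq> {}"
    using assms(2) by (metis card.empty less_numeral_extra(3))
  then show ?thesis by blast
qed

lemma exists_nontrivial_root_of_unity:
  assumes "1 < n"
  shows "\<exists>z::complex. z ^ n = 1 \<and> z \<noteq> 1"
proof (rule ccontr)
  assume "\<not> ?thesis"
  then have "{z::complex. z ^ n = 1} \<subseteq> {1}" by auto
  then have "card {z::complex. z ^ n = 1} \<le> card {1::complex}"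
    by (rule card_mono[rotated]) simp
  then show False using card_roots_unity_eq[of n] assms by simp
qed

lemma least_power_in:
  assumes "torsion_modulo K" "x \<noteq> 0"
  obtains d where "0 < d" "x ^ d \<in> K" "\<And>e. 0 < e \<Longrightarrow> e < d \<Longrightarrow> x ^ e \<notin> K"
proof -
  have "\<exists>d. 0 < d \<and> x ^ d \<in> K"
    using assms unfolding torsion_modulo_def by blast
  then show ?thesis
    using that exists_least_iff[of "\<lambda>d. 0 < d \<and> x ^ d \<in> K"] by blast
qed

lemma hom_on_extend_torsion:
  assumes K: "mult_subgroup K" and f: "hom_on K f" and t: "torsion_modulo K" and x: "x \<noteq> 0"
  shows "\<exists>K' f'. mult_subgroup K' \<and> hom_on K' f' \<and> K \<subseteq> K' \<and> x \<in> K' \<and> (\<forall>y\<in>K. f' y = f y)"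
proof -
  obtain d where d: "0 < d" "x ^ d \<in> K" "\<And>e. 0 < e \<Longrightarrow> e < d \<Longrightarrow> x ^ e \<notin> K"
    using least_power_in[OF t x] by blast
  have "f (x ^ d) \<noteq> 0" using f d by (simp add: hom_on_def)
  then obtain c where "c ^ d = f (x ^ d)" using exists_nth_root d(1) by blast
  from hom_on_extend_root[OF K f x d this] show ?thesis by blast
qed

lemma hom_on_extend_finite:
  assumes "finite R" "0 \<notin> R" "mult_subgroup K" "hom_on K f" "torsion_modulo K"
  shows "\<exists>K' f'. mult_subgroup K' \<and> hom_on K' f' \<and> K \<subseteq> K' \<and> R \<subseteq> K' \<and> (\<forall>y\<in>K. f' y = f y)"
  using assms
proof (induction R rule: finite_induct)
  case empty
  then show ?case by blast
next
  case (insert x R)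
  then obtain K1 f1 where K1: "mult_subgroup K1" "hom_on K1 f1" "K \<subseteq> K1" "R \<subseteq> K1"
    "\<forall>y\<in>K. f1 y = f y" by auto
  have "torsion_modulo K1" using insert(7) K1(3) unfolding torsion_modulo_def by blast
  then obtain K2 f2 where "mult_subgroup K2" "hom_on K2 f2" "K1 \<subseteq> K2" "x \<in> K2"
    "\<forall>y\<in>K1. f2 y = f1 y"
    using hom_on_extend_torsion[OF K1(1,2) \<open>torsion_modulo K1\<close>, of x] insert.prems(1)
    by auto
  then show ?case using K1 by (intro exI[of _ K2] exI[of _ f2]) auto
qed

lemma torsion_modulo_of_finite_index:
  assumes H: "mult_subgroup H" and R: "finite R"
    and cosets: "\<forall>x. x \<noteq> 0 \<longrightarrow> (\<exists>r\<in>R. x / r \<in> H)"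
  shows "torsion_modulo H"
  unfolding torsion_modulo_def
proof (intro allI impI)
  fix x :: 'a assume x: "x \<noteq> 0"
  have "\<exists>r. r \<in> R \<and> x ^ i / r \<in> H" for i
    using cosets power_not_zero[OF x] by blast
  then obtain \<rho> where \<rho>: "\<And>i. \<rho> i \<in> R \<and> x ^ i / \<rho> i \<in> H"
    by metis
  \<comment> \<open>pigeonhole: two of the powers \<open>x\<^sup>0, \<dots>, x\<^bsup>|R|\<^esup>\<close> lie in the same coset of \<open>H\<close>\<close>
  have "\<not> inj_on \<rho> {..card R}"
  proof
    assume "inj_on \<rho> {..card R}"
    then have "card {..card R} \<le> card R"
      using card_inj_on_le[of \<rho> "{..card R}" R] \<rho> R by blast
    then show False by simp
  qed
  then obtain i j where ij: "i < j" "\<rho> i = \<rho> j"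
    unfolding inj_on_def by (metis nat_neq_iff)
  have "x ^ (j - i) = (x ^ j / \<rho> j) / (x ^ i / \<rho> i)"
    using x ij H \<rho>[of i] by (auto simp: mult_subgroup_def power_diff)
  moreover have "(x ^ j / \<rho> j) / (x ^ i / \<rho> i) \<in> H"
    using mult_subgroup_divide[OF H] \<rho> by blast
  ultimately have "x ^ (j - i) \<in> H" by simp
  then show "\<exists>d>0. x ^ d \<in> H" using ij by (intro exI[of _ "j - i"]) simp
qed

lemma exists_hom_separating:
  assumes H: "mult_subgroup H" and R: "finite R" "0 \<notin> R"
    and cosets: "\<forall>x. x \<noteq> 0 \<longrightarrow> (\<exists>r\<in>R. x / r \<in> H)" and g: "g \<noteq> 0" "g \<notin> H"
  shows "\<exists>\<chi>. hom_on (- {0}) \<chi> \<and> (\<forall>h\<in>H. \<chi> h = 1) \<and> \<chi> g \<noteq> 1"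
proof -
  have t: "torsion_modulo H" using torsion_modulo_of_finite_index[OF H R(1) cosets] .
  obtain d where d: "0 < d" "g ^ d \<in> H" "\<And>e. 0 < e \<Longrightarrow> e < d \<Longrightarrow> g ^ e \<notin> H"
    using least_power_in[OF t g(1)] by blast
  have "d \<noteq> 1" using d(2) g(2) by (metis power_one_right)
  then have "1 < d" using d(1) by linarith
  then obtain c :: complex where c: "c ^ d = 1" "c \<noteq> 1"
    using exists_nontrivial_root_of_unity by blast
  have triv: "hom_on H (\<lambda>_. 1)" by (simp add: hom_on_def)
  obtain K1 f1 where K1: "mult_subgroup K1" "hom_on K1 f1" "H \<subseteq> K1" "g \<in> K1"
    "\<forall>y\<in>H. f1 y = 1" "f1 g = c"
    using hom_on_extend_root[OF H triv g(1) d, of c] c(1) by (auto simp only:)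
  obtain K2 f2 where K2: "mult_subgroup K2" "hom_on K2 f2" "K1 \<subseteq> K2" "R \<subseteq> K2"
    "\<forall>y\<in>K1. f2 y = f1 y"
    using hom_on_extend_finite[OF R K1(1,2)] t K1(3) unfolding torsion_modulo_def by blast
  have "x \<in> K2" if x: "x \<noteq> 0" for x
  proof -
    obtain r where r: "r \<in> R" "x / r \<in> H" using cosets x by blast
    then have "x / r * r \<in> K2" using K1(3) K2 unfolding mult_subgroup_def by blast
    moreover have "r \<noteq> 0" using r R(2) by blast
    ultimately show ?thesis by simp
  qed
  then have "hom_on (- {0}) f2" using K2(2) unfolding hom_on_def by blast
  moreover have "\<forall>h\<in>H. f2 h = 1" using K1(3,5) K2(5) by auto
  moreover have "f2 g \<noteq> 1" using K1(4,6) K2(5) c(2) by simp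
  ultimately show ?thesis by blast
qed

section \<open>Valuations and the unit filtration\<close>

locale uniformized_local_field =
  fixes v :: "'a::field_char_0 \<Rightarrow> int" and \<pi> :: 'a
  assumes local_field: "local_field v" and pi_nonzero: "\<pi> \<noteq> 0" and v_pi: "v \<pi> = 1"
begin

text \<open>\<open>val_ge x n\<close> says \<open>x \<in> \<pi>\<^sup>n \<O>\<close>, i.e. \<open>v x \<ge> n\<close> with the convention \<open>v 0 = \<infinity>\<close>.\<close>

definition val_ge :: "'a \<Rightarrow> int \<Rightarrow> bool" where
  "val_ge x n \<longleftrightarrow> x = 0 \<or> v x \<ge> n"

lemma v_mult: "x \<noteq> 0 \<Longrightarrow> y \<noteq> 0 \<Longrightarrow> v (x * y) = v x + v y"
  using local_field unfolding local_field_def by blast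

lemma v_add_ge_min: "x \<noteq> 0 \<Longrightarrow> y \<noteq> 0 \<Longrightarrow> x + y \<noteq> 0 \<Longrightarrow> min (v x) (v y) \<le> v (x + y)"
  using local_field unfolding local_field_def by blast

lemma finite_residue_field: "finite (residue_field v)"
  using local_field unfolding local_field_def by blast

lemma v_one [simp]: "v 1 = 0"
  using v_mult[of 1 1] by simp

lemma v_inverse: "x \<noteq> 0 \<Longrightarrow> v (inverse x) = - v x"
  using v_mult[of x "inverse x"] by simp

lemma v_divide: "x \<noteq> 0 \<Longrightarrow> y \<noteq> 0 \<Longrightarrow> v (x / y) = v x - v y"
  by (simp add: divide_inverse v_mult v_inverse)

lemma v_minus_one [simp]: "v (- 1) = 0"
  using v_mult[of "-1" "-1"] by simp

lemma v_minus: "x \<noteq> 0 \<Longrightarrow> v (- x) = v x"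
  using v_mult[of "-1" x] by simp

lemma v_power: "x \<noteq> 0 \<Longrightarrow> v (x ^ n) = int n * v x"
  by (induction n) (auto simp: v_mult algebra_simps)

lemma v_pi_power: "v (\<pi> ^ n) = int n"
  using v_power[OF pi_nonzero] v_pi by simp

lemma val_ge_0 [simp]: "val_ge 0 n"
  by (simp add: val_ge_def)

lemma val_ge_mono: "val_ge x n \<Longrightarrow> m \<le> n \<Longrightarrow> val_ge x m"
  by (auto simp: val_ge_def)

lemma val_ge_add:
  assumes "val_ge x n" "val_ge y n"
  shows "val_ge (x + y) n"
proof (cases "x = 0 \<or> y = 0 \<or> x + y = 0")
  case True
  then show ?thesis using assms by (auto simp: val_ge_def)
next
  case False
  then have "min (v x) (v y) \<le> v (x + y)" using v_add_ge_min by blast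
  with assms False show ?thesis by (auto simp: val_ge_def)
qed

lemma val_ge_minus_iff: "val_ge (- x) n \<longleftrightarrow> val_ge x n"
  by (cases "x = 0") (auto simp: val_ge_def v_minus)

lemma val_ge_diff: "val_ge x n \<Longrightarrow> val_ge y n \<Longrightarrow> val_ge (x - y) n"
  using val_ge_add[of x n "- y"] val_ge_minus_iff by simp

lemma val_ge_diff_commute: "val_ge (x - y) n \<longleftrightarrow> val_ge (y - x) n"
  using val_ge_minus_iff[of "x - y" n] by simp

lemma val_ge_diff_trans: "val_ge (x - y) n \<Longrightarrow> val_ge (y - z) n \<Longrightarrow> val_ge (x - z) n"
  using val_ge_add[of "x - y" n "y - z"] by simp

lemma val_ge_mult_unit_iff: "u \<noteq> 0 \<Longrightarrow> v u = 0 \<Longrightarrow> val_ge (x * u) n \<longleftrightarrow> val_ge x n"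
  by (cases "x = 0") (auto simp: val_ge_def v_mult)

lemma val_ge_divide_unit_iff: "u \<noteq> 0 \<Longrightarrow> v u = 0 \<Longrightarrow> val_ge (x / u) n \<longleftrightarrow> val_ge x n"
  by (cases "x = 0") (auto simp: val_ge_def v_divide)

lemma val_ge_mult_pi_power_iff: "val_ge (x * \<pi> ^ j) n \<longleftrightarrow> val_ge x (n - int j)"
  using pi_nonzero by (cases "x = 0") (auto simp: val_ge_def v_mult v_pi_power)

lemma unit_if_val_ge_diff_one:
  assumes "val_ge (x - 1) 1"
  shows "x \<noteq> 0" "v x = 0"
proof -
  show "x \<noteq> 0" using assms by (auto simp: val_ge_def)
  have "val_ge x 0"
    using val_ge_add[of "x - 1" 0 1] val_ge_mono[OF assms] by (simp add: val_ge_def)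
  moreover have "\<not> val_ge x 1"
    using val_ge_diff[of x 1 "x - 1"] assms by (auto simp: val_ge_def)
  ultimately show "v x = 0" using \<open>x \<noteq> 0\<close> by (auto simp: val_ge_def)
qed

abbreviation U :: "nat \<Rightarrow> 'a set" where
  "U \<equiv> unitU v"

lemma U_Suc_iff: "x \<in> U (Suc j) \<longleftrightarrow> val_ge (x - 1) (int (Suc j))"
proof -
  have "val_ge (x - 1) (int (Suc j)) \<Longrightarrow> x \<noteq> 0"
    using unit_if_val_ge_diff_one val_ge_mono[of "x - 1" "int (Suc j)" 1] by auto
  then show ?thesis by (auto simp: unitU_def val_ge_def)
qed

lemma U_iff: "0 < j \<Longrightarrow> x \<in> U j \<longleftrightarrow> val_ge (x - 1) (int j)"
  using U_Suc_iff[of x "j - 1"] by simp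

lemma U_0_iff: "x \<in> U 0 \<longleftrightarrow> x \<noteq> 0 \<and> v x = 0"
  by (simp add: unitU_def)

lemma unit_if_in_U: "x \<in> U j \<Longrightarrow> x \<noteq> 0 \<and> v x = 0"
  by (cases j) (auto simp: U_0_iff U_Suc_iff dest: unit_if_val_ge_diff_one val_ge_mono[where m = 1])

lemma U_antimono: "j \<le> i \<Longrightarrow> x \<in> U i \<Longrightarrow> x \<in> U j"
proof (cases "j = 0")
  case True
  then show "x \<in> U i \<Longrightarrow> ?thesis" using unit_if_in_U U_0_iff by auto
next
  case False
  assume "j \<le> i" "x \<in> U i"
  then show ?thesis
    using False U_iff[of j x] U_iff[of i x] val_ge_mono[of "x - 1" "int i" "int j"] by auto
qed

lemma one_in_U [simp]: "1 \<in> U j"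
  by (cases j) (auto simp: U_0_iff U_Suc_iff)

lemma U_mult:
  assumes x: "x \<in> U j" and y: "y \<in> U j"
  shows "x * y \<in> U j"
proof (cases "j = 0")
  case True
  then show ?thesis using assms by (auto simp: U_0_iff v_mult)
next
  case False
  have "val_ge (x * (y - 1)) j"
    using val_ge_mult_unit_iff[of x "y - 1" j] unit_if_in_U[OF x] y False U_iff
    by (simp add: mult.commute)
  moreover have "val_ge (x - 1) j" using x False U_iff by simp
  ultimately have "val_ge (x * (y - 1) + (x - 1)) j" by (rule val_ge_add)
  moreover have "x * (y - 1) + (x - 1) = x * y - 1" by (simp add: algebra_simps)
  ultimately show ?thesis using False U_iff by simp
qed

lemma U_inverse:
  assumes "x \<in> U j"
  shows "inverse x \<in> U j"
proof (cases "j = 0")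
  case True
  then show ?thesis using assms by (auto simp: U_0_iff v_inverse)
next
  case False
  have x: "x \<noteq> 0" "v x = 0" using unit_if_in_U[OF assms] by auto
  have "inverse x - 1 = - ((x - 1) / x)" using x by (simp add: field_simps)
  moreover have "val_ge ((x - 1) / x) j"
    using val_ge_divide_unit_iff[OF x] assms False U_iff by simp
  ultimately show ?thesis using False U_iff val_ge_minus_iff by simp
qed

lemma U_divide: "x \<in> U j \<Longrightarrow> y \<in> U j \<Longrightarrow> x / y \<in> U j"
  by (simp add: divide_inverse U_mult U_inverse)

lemma U_power: "x \<in> U j \<Longrightarrow> x ^ n \<in> U j"
  by (induction n) (auto intro: U_mult)

lemma divide_in_U_Suc_iff:
  assumes "x \<in> U j" "y \<in> U j"
  shows "x / y \<in> U (Suc j) \<longleftrightarrow> val_ge (x - y) (int (Suc j))"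
proof -
  have y: "y \<noteq> 0" "v y = 0" using unit_if_in_U[OF assms(2)] by auto
  have "x / y - 1 = (x - y) / y" using y by (simp add: field_simps)
  then show ?thesis using U_Suc_iff val_ge_divide_unit_iff[OF y] by simp
qed

end

section \<open>Characters and conductors\<close>

context uniformized_local_field
begin

definition trivial_on :: "('a \<Rightarrow> complex) \<Rightarrow> nat \<Rightarrow> bool" where
  "trivial_on f n \<longleftrightarrow> (\<forall>u\<in>U n. f u = 1)"

lemma trivial_on_mono: "trivial_on f n \<Longrightarrow> n \<le> m \<Longrightarrow> trivial_on f m"
  using U_antimono unfolding trivial_on_def by blast

lemma trivial_on_cond:
  assumes "trivial_on f n"
  shows "trivial_on f (cond v f)"
  using assms unfolding cond_def trivial_on_def by (rule LeastI)

lemma cond_le_iff: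
  assumes "\<exists>n. trivial_on f n"
  shows "cond v f \<le> m \<longleftrightarrow> trivial_on f m"
proof
  assume "cond v f \<le> m"
  then show "trivial_on f m" using trivial_on_mono trivial_on_cond assms by blast
next
  assume "trivial_on f m"
  then show "cond v f \<le> m" unfolding cond_def trivial_on_def by (rule Least_le)
qed

lemma cond_eq_Suc_iff:
  assumes "\<exists>n. trivial_on f n"
  shows "cond v f = Suc i \<longleftrightarrow> trivial_on f (Suc i) \<and> \<not> trivial_on f i"
  using cond_le_iff[OF assms, of "Suc i"] cond_le_iff[OF assms, of i] by auto

lemma cond_cong:
  assumes "\<And>x. x \<in> U 0 \<Longrightarrow> f x = g x"
  shows "cond v f = cond v g"
proof -
  have "(\<forall>u\<in>U k. f u = 1) \<longleftrightarrow> (\<forall>u\<in>U k. g u = 1)" for k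
    using assms U_antimono[of 0 k] by auto
  then show ?thesis unfolding cond_def by simp
qed

lemma cond_inverse: "cond v (\<lambda>x. inverse (f x)) = cond v f"
  unfolding cond_def by simp

lemma cond_divide_commute: "cond v (\<lambda>x. f x / g x) = cond v (\<lambda>x. g x / f x)"
  using cond_inverse[of "\<lambda>x. f x / g x"] by simp

lemma is_char_imp_hom_on: "is_char v f \<Longrightarrow> hom_on (- {0}) f"
  unfolding is_char_def hom_on_def by blast

lemma is_char_nonzero: "is_char v f \<Longrightarrow> x \<noteq> 0 \<Longrightarrow> f x \<noteq> 0"
  unfolding is_char_def by blast

lemma is_char_if_trivial_on:
  assumes f: "hom_on (- {0}) f" and n: "trivial_on f n"
  shows "is_char v f"
  unfolding is_char_def
proof (intro conjI allI impI)
  fix x y :: 'a assume "x \<noteq> 0" "y \<noteq> 0"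
  then show "f (x * y) = f x * f y" using f unfolding hom_on_def by blast
next
  fix x :: 'a assume "x \<noteq> 0"
  then show "f x \<noteq> 0" using f unfolding hom_on_def by blast
next
  fix x :: 'a and e :: real assume x: "x \<noteq> 0" and e: "e > 0"
  \<comment> \<open>\<open>f\<close> is even locally constant: \<open>f y = f x\<close> as soon as \<open>y / x \<in> U\<^sub>n\<^sub>+\<^sub>1\<close>\<close>
  show "\<exists>N. \<forall>y. y \<noteq> 0 \<longrightarrow> y = x \<or> N \<le> v (y - x) \<longrightarrow> cmod (f y - f x) < e"
  proof (intro exI allI impI)
    fix y :: 'a assume y: "y \<noteq> 0" and near: "y = x \<or> v x + int n + 1 \<le> v (y - x)"
    have "y / x - 1 = (y - x) / x" using x by (simp add: field_simps)
    moreover have "val_ge ((y - x) / x) (int (Suc n))"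
      using near x by (cases "y = x") (auto simp: val_ge_def v_divide)
    ultimately have "y / x \<in> U n"
      using U_Suc_iff U_antimono[of n "Suc n"] by auto
    then have "f (y / x) = 1" using n unfolding trivial_on_def by blast
    moreover have "f (x * (y / x)) = f x * f (y / x)"
      using f x y unfolding hom_on_def by (simp del: times_divide_eq_right)
    ultimately have "f y = f x"
      using x by simp
    then show "cmod (f y - f x) < e" using e by simp
  qed
qed

text \<open>Continuity at \<open>1\<close> makes \<open>f(U\<^sub>n)\<close> a subgroup of the unit disc around \<open>1\<close>, which must be trivial.\<close>

lemma is_char_imp_trivial_on:
  assumes "is_char v f"
  shows "\<exists>n. trivial_on f n"
proof -
  have f: "hom_on (- {0}) f" using is_char_imp_hom_on[OF assms] .
  have f1: "f 1 = 1" using hom_on_one[OF mult_subgroup_nonzero f] .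
  obtain N where N: "\<forall>y. y \<noteq> 0 \<longrightarrow> (y = 1 \<or> N \<le> v (y - 1)) \<longrightarrow> cmod (f y - f 1) < 1"
    using assms unfolding is_char_def by (meson zero_less_one one_neq_zero)
  define n where "n = nat (max N 1)"
  have n: "0 < n" "N \<le> int n" unfolding n_def by auto
  have near: "cmod (f y - 1) < 1" if "y \<in> U n" for y
  proof -
    have "val_ge (y - 1) n" using that n U_iff by simp
    then have "y = 1 \<or> N \<le> v (y - 1)" using n by (auto simp: val_ge_def)
    then show ?thesis using N unit_if_in_U[OF that] f1 by auto
  qed
  have "f u = 1" if u: "u \<in> U n" for u
  proof (rule eq_one_if_powers_near_one)
    have u0: "u \<noteq> 0" using unit_if_in_U[OF u] by simp
    show "f u \<noteq> 0" using f u0 unfolding hom_on_def by simp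
    fix m :: nat
    show "cmod (f u ^ m - 1) < 1"
      using near[OF U_power[OF u, of m]] hom_on_power[OF mult_subgroup_nonzero f, of u m] u0
      by simp
    show "cmod (inverse (f u) ^ m - 1) < 1"
      using near[OF U_power[OF U_inverse[OF u], of m]] u0
        hom_on_power[OF mult_subgroup_nonzero f, of "inverse u" m]
        hom_on_inverse[OF mult_subgroup_nonzero f, of u] by simp
  qed
  then show ?thesis unfolding trivial_on_def by blast
qed

lemma is_char_iff: "is_char v f \<longleftrightarrow> hom_on (- {0}) f \<and> (\<exists>n. trivial_on f n)"
  by (meson is_char_imp_hom_on is_char_imp_trivial_on is_char_if_trivial_on)

end

section \<open>The residue field and the quotients \<open>U\<^sub>j / U\<^sub>j\<^sub>+\<^sub>1\<close>\<close>

context uniformized_local_field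
begin

definition residue_rel :: "('a \<times> 'a) set" where
  "residue_rel = {(x, y). x \<in> val_ring v \<and> y \<in> val_ring v \<and> x - y \<in> val_ideal v}"

lemma residue_rel_iff: "(x, y) \<in> residue_rel \<longleftrightarrow> val_ge x 0 \<and> val_ge y 0 \<and> val_ge (x - y) 1"
  by (auto simp: residue_rel_def val_ring_def val_ideal_def val_ge_def)

lemma residue_field_eq: "residue_field v = {residue_rel `` {a} | a. val_ge a 0}"
  unfolding residue_field_def residue_rel_def[symmetric] quotient_def
  by (auto simp: val_ring_def val_ge_def)

lemma residue_class_eq:
  assumes "val_ge (a - b) 1"
  shows "residue_rel `` {a} = residue_rel `` {b}"
proof -
  have "val_ge a 0 \<longleftrightarrow> val_ge b 0"
    using assms val_ge_add[of "a - b" 0 b] val_ge_diff[of a 0 "a - b"] val_ge_mono[of "a - b" 1 0]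
    by force
  moreover have "val_ge (a - y) 1 \<longleftrightarrow> val_ge (b - y) 1" for y
    using assms val_ge_diff_trans val_ge_diff_commute by blast
  ultimately show ?thesis by (auto simp: residue_rel_iff)
qed

lemma card_le_resq:
  assumes T: "T \<subseteq> {x. val_ge x 0}" "pairwise (\<lambda>x y. \<not> val_ge (x - y) 1) T"
  shows "card T \<le> resq v"
proof -
  have "inj_on (\<lambda>t. residue_rel `` {t}) T"
  proof (rule inj_onI)
    fix x y assume xy: "x \<in> T" "y \<in> T" "residue_rel `` {x} = residue_rel `` {y}"
    have "y \<in> residue_rel `` {y}" using xy T by (auto simp: residue_rel_iff)
    then have "val_ge (x - y) 1" using xy by (auto simp: residue_rel_iff)
    then show "x = y" using T xy unfolding pairwise_def by blast
  qed
  moreover have "(\<lambda>t. residue_rel `` {t}) ` T \<subseteq> residue_field v"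
    using T by (auto simp: residue_field_eq)
  ultimately show ?thesis
    unfolding resq_def using card_inj_on_le finite_residue_field by blast
qed

lemma residue_representatives:
  obtains T where "finite T" "T \<subseteq> {x. val_ge x 0}" "card T = resq v"
    "pairwise (\<lambda>x y. \<not> val_ge (x - y) 1) T" "\<And>x. val_ge x 0 \<Longrightarrow> \<exists>t\<in>T. val_ge (x - t) 1"
proof -
  define rep where "rep C = (SOME a. val_ge a 0 \<and> C = residue_rel `` {a})" for C
  have rep: "val_ge (rep C) 0 \<and> C = residue_rel `` {rep C}" if "C \<in> residue_field v" for C
    using that unfolding residue_field_eq rep_def by (smt (verit) mem_Collect_eq someI_ex)
  have "inj_on rep (residue_field v)"
    by (rule inj_onI) (metis rep)
  moreover define T where "T = rep ` residue_field v"
  ultimately have "card T = resq v" by (simp add: card_image resq_def)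
  moreover have "finite T" "T \<subseteq> {x. val_ge x 0}"
    unfolding T_def using finite_residue_field rep by auto
  moreover have "pairwise (\<lambda>x y. \<not> val_ge (x - y) 1) T"
    unfolding T_def pairwise_def using rep residue_class_eq by (metis image_iff)
  moreover have "\<exists>t\<in>T. val_ge (x - t) 1" if "val_ge x 0" for x
  proof -
    have C: "residue_rel `` {x} \<in> residue_field v" using that by (auto simp: residue_field_eq)
    then have "(rep (residue_rel `` {x}), x) \<in> residue_rel"
      using rep[OF C] that by (auto simp: residue_rel_iff)
    then show ?thesis unfolding T_def using C val_ge_diff_commute
      by (auto simp: residue_rel_iff)
  qed
  ultimately show ?thesis using that by blast
qed

lemma incongruent_subset:
  assumes "n \<le> resq v"
  obtains T where "card T = n" "T \<subseteq> {x. val_ge x 0}" "pairwise (\<lambda>x y. \<not> val_ge (x - y) 1) T"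
proof -
  obtain S where S: "S \<subseteq> {x. val_ge x 0}" "card S = resq v"
    "pairwise (\<lambda>x y. \<not> val_ge (x - y) 1) S"
    by (rule residue_representatives)
  have "n \<le> card S" using assms S(2) by simp
  then obtain T where T: "T \<subseteq> S" "card T = n"
    by (rule obtain_subset_with_card_n)
  have "pairwise (\<lambda>x y. \<not> val_ge (x - y) 1) T"
    using S(3) T(1) by (rule pairwise_subset)
  then show ?thesis
    using that T S(1) by blast
qed

lemma pi_power_nonzero: "\<pi> ^ j \<noteq> 0"
  using pi_nonzero by simp

lemma one_plus_pi_power_in_U:
  assumes "0 < j" "val_ge a 0"
  shows "1 + a * \<pi> ^ j \<in> U j"
  using assms U_iff val_ge_mult_pi_power_iff by simp

lemma one_plus_pi_power_divide_notin_U: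
  assumes "0 < j" "val_ge a 0" "val_ge b 0" "\<not> val_ge (a - b) 1"
  shows "(1 + a * \<pi> ^ j) / (1 + b * \<pi> ^ j) \<notin> U (Suc j)"
proof
  assume "(1 + a * \<pi> ^ j) / (1 + b * \<pi> ^ j) \<in> U (Suc j)"
  then have "val_ge ((1 + a * \<pi> ^ j) - (1 + b * \<pi> ^ j)) (int (Suc j))"
    using divide_in_U_Suc_iff one_plus_pi_power_in_U assms by blast
  moreover have "(1 + a * \<pi> ^ j) - (1 + b * \<pi> ^ j) = (a - b) * \<pi> ^ j"
    by (simp add: algebra_simps)
  ultimately show False using assms val_ge_mult_pi_power_iff by simp
qed

lemma pi_power_in_U_notin_U_Suc:
  assumes "0 < j"
  shows "1 + \<pi> ^ j \<in> U j" "1 + \<pi> ^ j \<notin> U (Suc j)"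
proof -
  show "1 + \<pi> ^ j \<in> U j" using one_plus_pi_power_in_U[OF assms, of 1] by (simp add: val_ge_def)
  have "\<not> val_ge (\<pi> ^ j) (int (Suc j))"
    using pi_power_nonzero by (simp add: val_ge_def v_pi_power)
  then show "1 + \<pi> ^ j \<notin> U (Suc j)" using U_Suc_iff by simp
qed

text \<open>The map \<open>u \<mapsto> (u - 1) / \<pi>\<^sup>j\<close> embeds \<open>U\<^sub>j / U\<^sub>j\<^sub>+\<^sub>1\<close> into the residue field.\<close>

lemma card_le_resq_U:
  assumes j: "0 < j" and T: "T \<subseteq> U j" "pairwise (\<lambda>x y. x / y \<notin> U (Suc j)) T"
  shows "card T \<le> resq v"
proof -
  define f where "f x = (x - 1) / \<pi> ^ j" for x
  have inj: "inj_on f T"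
    unfolding f_def using pi_nonzero by (intro inj_onI) (auto simp: divide_cancel_right)
  have fx: "f x * \<pi> ^ j = x - 1" for x
    unfolding f_def using pi_power_nonzero by simp
  have "card (f ` T) \<le> resq v"
  proof (rule card_le_resq)
    show "f ` T \<subseteq> {x. val_ge x 0}"
    proof
      fix z assume "z \<in> f ` T"
      then obtain x where x: "x \<in> T" "z = f x" by blast
      then have "val_ge (f x * \<pi> ^ j) (int j)" using fx T j U_iff by auto
      then show "z \<in> {x. val_ge x 0}" using x val_ge_mult_pi_power_iff by simp
    qed
    show "pairwise (\<lambda>x y. \<not> val_ge (x - y) 1) (f ` T)"
      unfolding pairwise_def
    proof (intro ballI impI notI)
      fix z w assume "z \<in> f ` T" "w \<in> f ` T" "z \<noteq> w" "val_ge (z - w) 1"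
      then obtain x y where xy: "x \<in> T" "y \<in> T" "z = f x" "w = f y" "x \<noteq> y" by blast
      have "(z - w) * \<pi> ^ j = x - y"
        using xy fx[of x] fx[of y] by (simp add: left_diff_distrib)
      then have "val_ge (x - y) (int (Suc j))"
        using \<open>val_ge (z - w) 1\<close> val_ge_mult_pi_power_iff[of "z - w" j "int (Suc j)"] by simp
      then have "x / y \<in> U (Suc j)"
        using divide_in_U_Suc_iff xy T by blast
      then show False using T xy unfolding pairwise_def by blast
    qed
  qed
  then show ?thesis using card_image[OF inj] by simp
qed

lemma incongruent_subset_U:
  assumes "0 < j" "n \<le> resq v"
  obtains T where "card T = n" "T \<subseteq> U j" "pairwise (\<lambda>x y. x / y \<notin> U (Suc j)) T"
proof -
  obtain A where A: "card A = n" "A \<subseteq> {x. val_ge x 0}" "pairwise (\<lambda>x y. \<not> val_ge (x - y) 1) A"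
    using incongruent_subset[OF assms(2)] .
  define g where "g a = 1 + a * \<pi> ^ j" for a
  have "inj_on g A"
    unfolding g_def using pi_nonzero by (intro inj_onI) simp
  moreover have "g ` A \<subseteq> U j"
    unfolding g_def using A(2) one_plus_pi_power_in_U[OF assms(1)] by auto
  moreover have "pairwise (\<lambda>x y. x / y \<notin> U (Suc j)) (g ` A)"
    unfolding pairwise_def
  proof (intro ballI impI)
    fix x y assume "x \<in> g ` A" "y \<in> g ` A" "x \<noteq> y"
    then obtain a b where "a \<in> A" "b \<in> A" "a \<noteq> b" "x = g a" "y = g b" by blast
    then show "x / y \<notin> U (Suc j)"
      using A(2,3) one_plus_pi_power_divide_notin_U[OF assms(1), of a b]
      unfolding pairwise_def g_def by blast
  qed
  ultimately show ?thesis using that A(1) by (metis card_image)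
qed

lemma U_0_subset_U_1_if_resq_2:
  assumes q: "resq v = 2" and x: "x \<in> U 0"
  shows "x \<in> U 1"
proof (rule ccontr)
  assume nx: "x \<notin> U 1"
  have x0: "x \<noteq> 0" "v x = 0" using unit_if_in_U[OF x] by auto
  have x1: "\<not> val_ge (x - 1) 1" "\<not> val_ge (1 - x) 1"
    using nx U_iff[of 1 x] val_ge_diff_commute by auto
  have "card {0, 1, x} \<le> resq v"
    using x0 x1 by (intro card_le_resq) (auto simp: pairwise_def val_ge_def v_minus)
  moreover have "x \<noteq> 1" using nx by auto
  then have "card {0, 1, x} = 3" using x0 by simp
  ultimately show False using q by simp
qed

lemma exists_U_0_notin_U_1:
  assumes "3 \<le> resq v"
  obtains g where "g \<in> U 0" "g \<notin> U 1"
proof -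
  obtain T where T: "card T = 3" "T \<subseteq> {x. val_ge x 0}" "pairwise (\<lambda>x y. \<not> val_ge (x - y) 1) T"
    using incongruent_subset[OF assms] .
  then obtain a b c where abc: "T = {a, b, c}" "a \<noteq> b" "a \<noteq> c" "b \<noteq> c"
    by (metis card_3_iff)
  have same0: "val_ge (x - y) 1" if "val_ge (x - 0) 1" "val_ge (y - 0) 1" for x y
    using that val_ge_diff_trans val_ge_diff_commute by blast
  have same1: "val_ge (x - y) 1" if "val_ge (x - 1) 1" "val_ge (y - 1) 1" for x y
    using that val_ge_diff_trans val_ge_diff_commute by blast
  \<comment> \<open>among three residue classes one avoids both \<open>0\<close> and \<open>1\<close>\<close>
  have "\<exists>g\<in>T. \<not> val_ge g 1 \<and> \<not> val_ge (g - 1) 1"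
    using T(3) abc same0[of a b] same0[of a c] same0[of b c] same1[of a b] same1[of a c]
      same1[of b c]
    unfolding pairwise_def by auto
  then obtain g where g: "val_ge g 0" "\<not> val_ge g 1" "\<not> val_ge (g - 1) 1"
    using T(2) by blast
  then have "g \<in> U 0" using U_0_iff by (auto simp: val_ge_def)
  moreover have "g \<notin> U 1" using g(3) U_iff[of 1 g] by simp
  ultimately show ?thesis by (rule that)
qed

end

section \<open>Characters with prescribed behaviour\<close>

context uniformized_local_field
begin

lemma finite_reps_mod_pi_power:
  "\<exists>T. finite T \<and> (\<forall>x. val_ge x 0 \<longrightarrow> (\<exists>t\<in>T. val_ge (x - t) (int n)))"
proof (induction n)
  case 0
  show ?case by (intro exI[of _ "{0}"]) (simp add: val_ge_def)
next
  case (Suc n)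
  then obtain T where T: "finite T" "\<And>x. val_ge x 0 \<Longrightarrow> \<exists>t\<in>T. val_ge (x - t) (int n)"
    by blast
  obtain S where S: "finite S" "S \<subseteq> {x. val_ge x 0}" "card S = resq v"
    "pairwise (\<lambda>x y. \<not> val_ge (x - y) 1) S" "\<And>x. val_ge x 0 \<Longrightarrow> \<exists>s\<in>S. val_ge (x - s) 1"
    by (rule residue_representatives) (rule that)
  define T' where "T' = (\<lambda>(t, s). t + s * \<pi> ^ n) ` (T \<times> S)"
  have "\<exists>t'\<in>T'. val_ge (x - t') (int (Suc n))" if x: "val_ge x 0" for x
  proof -
    obtain t where t: "t \<in> T" "val_ge (x - t) (int n)" using T(2)[OF x] by blast
    define y where "y = (x - t) / \<pi> ^ n"
    have y: "y * \<pi> ^ n = x - t" unfolding y_def using pi_nonzero by simp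
    then have "val_ge y 0" using t(2) val_ge_mult_pi_power_iff[of y n "int n"] by simp
    then obtain s where s: "s \<in> S" "val_ge (y - s) 1" using S(5) by blast
    have "x - (t + s * \<pi> ^ n) = (y - s) * \<pi> ^ n" using y by (simp add: algebra_simps)
    then have "val_ge (x - (t + s * \<pi> ^ n)) (int (Suc n))"
      using s(2) val_ge_mult_pi_power_iff by simp
    moreover have "t + s * \<pi> ^ n \<in> T'"
      unfolding T'_def using t(1) s(1) by (intro image_eqI[of _ _ "(t, s)"]) auto
    ultimately show ?thesis by blast
  qed
  moreover have "finite T'" unfolding T'_def using T(1) S(1) by simp
  ultimately show ?case by blast
qed

lemma finite_index_U:
  obtains R where "finite R" "R \<subseteq> U 0" "\<And>u. u \<in> U 0 \<Longrightarrow> \<exists>r\<in>R. u / r \<in> U n"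
proof (cases "n = 0")
  case True
  then show ?thesis using that[of "{1}"] by simp
next
  case False
  obtain T where T: "finite T" "\<forall>x. val_ge x 0 \<longrightarrow> (\<exists>t\<in>T. val_ge (x - t) (int n))"
    using finite_reps_mod_pi_power by blast
  have "\<exists>r\<in>T \<inter> U 0. u / r \<in> U n" if u: "u \<in> U 0" for u
  proof -
    have u0: "u \<noteq> 0" "v u = 0" using u U_0_iff by auto
    then have "val_ge u 0" by (simp add: val_ge_def)
    then obtain t where t: "t \<in> T" "val_ge (u - t) (int n)"
      using T(2) by blast
    then have "val_ge (t - u) (int n)" using val_ge_diff_commute by blast
    have "t / u - 1 = (t - u) / u" using u0 by (simp add: field_simps)
    then have tu: "t / u \<in> U n"
      using \<open>val_ge (t - u) (int n)\<close> False U_iff val_ge_divide_unit_iff[OF u0] by simp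
    have "t = t / u * u" using u0 by simp
    then have "t \<in> U 0" using U_mult[OF U_antimono[OF _ tu] u] by simp
    moreover have "u / t = inverse (t / u)" by simp
    then have "u / t \<in> U n" using U_inverse[OF tu] by simp
    ultimately show ?thesis using t(1) by blast
  qed
  then show ?thesis using that[of "T \<inter> U 0"] T(1) by blast
qed

lemma v_pi_power_int: "v (\<pi> powi m) = m"
  using v_pi_power[of "nat m"] v_pi_power[of "nat (- m)"] v_inverse[of "\<pi> ^ nat (- m)"] pi_nonzero
  by (cases "0 \<le> m") (auto simp: power_int_def power_inverse)

text \<open>The subgroup \<open>\<pi>\<^sup>\<int> U\<^sub>n\<close> of \<open>F\<^sup>\<times>\<close>.\<close>

definition pi_U :: "nat \<Rightarrow> 'a set" where
  "pi_U n = {z. z \<noteq> 0 \<and> z / \<pi> powi v z \<in> U n}"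

lemma mult_subgroup_pi_U: "mult_subgroup (pi_U n)"
  unfolding mult_subgroup_def
proof (intro conjI ballI)
  show "1 \<in> pi_U n" "0 \<notin> pi_U n" by (simp_all add: pi_U_def)
next
  fix x y assume "x \<in> pi_U n" "y \<in> pi_U n"
  then have xy: "x \<noteq> 0" "y \<noteq> 0" "x / \<pi> powi v x \<in> U n" "y / \<pi> powi v y \<in> U n"
    by (auto simp: pi_U_def)
  have eq: "x * y / \<pi> powi v (x * y) = (x / \<pi> powi v x) * (y / \<pi> powi v y)"
    using xy pi_nonzero by (simp add: v_mult power_int_add)
  have "x * y / \<pi> powi v (x * y) \<in> U n"
    unfolding eq by (rule U_mult[OF xy(3,4)])
  then show "x * y \<in> pi_U n" using xy by (simp add: pi_U_def)
next
  fix x assume "x \<in> pi_U n"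
  then have x: "x \<noteq> 0" "x / \<pi> powi v x \<in> U n" by (auto simp: pi_U_def)
  have "v (inverse x) = - v x" using x(1) by (rule v_inverse)
  then have eq: "inverse x / \<pi> powi v (inverse x) = inverse (x / \<pi> powi v x)"
    using x pi_nonzero by (simp add: power_int_minus divide_inverse mult.commute)
  have "inverse x / \<pi> powi v (inverse x) \<in> U n"
    unfolding eq by (rule U_inverse[OF x(2)])
  then show "inverse x \<in> pi_U n" using x by (simp add: pi_U_def)
qed

lemma U_subset_pi_U: "U n \<subseteq> pi_U n"
  using unit_if_in_U by (auto simp: pi_U_def)

lemma pi_in_pi_U: "\<pi> \<in> pi_U n"
  using pi_nonzero v_pi by (simp add: pi_U_def)

lemma notin_pi_U: "g \<in> U 0 \<Longrightarrow> g \<notin> U n \<Longrightarrow> g \<notin> pi_U n"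
  using unit_if_in_U by (auto simp: pi_U_def)

lemma finite_index_pi_U:
  obtains R where "finite R" "0 \<notin> R" "\<forall>x. x \<noteq> 0 \<longrightarrow> (\<exists>r\<in>R. x / r \<in> pi_U n)"
proof -
  obtain R where R: "finite R" "R \<subseteq> U 0" "\<And>u. u \<in> U 0 \<Longrightarrow> \<exists>r\<in>R. u / r \<in> U n"
    by (rule finite_index_U) (rule that)
  have "\<exists>r\<in>R. x / r \<in> pi_U n" if x: "x \<noteq> 0" for x
  proof -
    define u where "u = x / \<pi> powi v x"
    have "u \<in> U 0" unfolding u_def using x pi_nonzero by (simp add: U_0_iff v_divide v_pi_power_int)
    then obtain r where r: "r \<in> R" "u / r \<in> U n" using R(3) by blast
    have r0: "r \<noteq> 0" "v r = 0" using r R(2) U_0_iff by auto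
    have "x / r / \<pi> powi v (x / r) = u / r"
      unfolding u_def using x r0 by (simp add: v_divide)
    then show ?thesis using r x r0 by (auto simp: pi_U_def)
  qed
  moreover have "0 \<notin> R" using R(2) U_0_iff by auto
  ultimately show ?thesis using that R(1) by blast
qed

lemma exists_charX_separating:
  assumes "g \<in> U 0" "g \<notin> U n"
  obtains \<mu> where "\<mu> \<in> charX v \<pi>" "trivial_on \<mu> n" "\<mu> g \<noteq> 1"
proof -
  obtain R where R: "finite R" "0 \<notin> R" "\<forall>x. x \<noteq> 0 \<longrightarrow> (\<exists>r\<in>R. x / r \<in> pi_U n)"
    by (rule finite_index_pi_U)
  have g: "g \<noteq> 0" "g \<notin> pi_U n" using assms U_0_iff notin_pi_U by auto
  obtain \<mu> where \<mu>: "hom_on (- {0}) \<mu>" "\<forall>h\<in>pi_U n. \<mu> h = 1" "\<mu> g \<noteq> 1"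
    using exists_hom_separating[OF mult_subgroup_pi_U R g] by blast
  have "trivial_on \<mu> n" using \<mu>(2) U_subset_pi_U unfolding trivial_on_def by blast
  moreover have "\<mu> \<in> charX v \<pi>"
    using is_char_if_trivial_on[OF \<mu>(1) calculation] \<mu>(2) pi_in_pi_U by (simp add: charX_def)
  ultimately show ?thesis using that \<mu>(3) by blast
qed

lemma exists_charX_cond:
  assumes "n \<noteq> 1 \<or> 3 \<le> resq v"
  obtains \<sigma> where "\<sigma> \<in> charX v \<pi>" "cond v \<sigma> = n"
proof (cases n)
  case 0
  have triv: "trivial_on (\<lambda>_. 1) 0" by (simp add: trivial_on_def)
  then have "is_char v (\<lambda>_. 1)" by (auto simp: is_char_iff hom_on_def)
  moreover have "cond v (\<lambda>_. 1) \<le> 0" using cond_le_iff[of "\<lambda>_. 1" 0] triv by blast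
  ultimately show ?thesis using that[of "\<lambda>_. 1"] 0 by (simp add: charX_def)
next
  case (Suc i)
  obtain g where g: "g \<in> U i" "g \<notin> U (Suc i)"
  proof (cases "i = 0")
    case True
    then show ?thesis using that exists_U_0_notin_U_1 assms Suc by auto
  next
    case False
    then show ?thesis using that pi_power_in_U_notin_U_Suc by blast
  qed
  then obtain \<sigma> where \<sigma>: "\<sigma> \<in> charX v \<pi>" "trivial_on \<sigma> (Suc i)" "\<sigma> g \<noteq> 1"
    using exists_charX_separating U_antimono[of 0 i] by blast
  then have "\<not> trivial_on \<sigma> i" using g(1) unfolding trivial_on_def by blast
  then have "cond v \<sigma> = n" using Suc \<sigma>(2) cond_eq_Suc_iff by blast
  then show ?thesis using that \<sigma>(1) by blast
qed

end

section \<open>Conductors of products and twists\<close>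

context uniformized_local_field
begin

lemma trivial_on_mult: "trivial_on f n \<Longrightarrow> trivial_on g n \<Longrightarrow> trivial_on (\<lambda>x. f x * g x) n"
  unfolding trivial_on_def by simp

lemma is_char_mult:
  assumes "is_char v f" "is_char v g"
  shows "is_char v (\<lambda>x. f x * g x)"
proof -
  obtain m n where "trivial_on f m" "trivial_on g n"
    using assms is_char_imp_trivial_on by blast
  then have "trivial_on (\<lambda>x. f x * g x) (max m n)"
    using trivial_on_mono trivial_on_mult by (meson max.cobounded1 max.cobounded2)
  moreover have "hom_on (- {0}) (\<lambda>x. f x * g x)"
    using is_char_imp_hom_on[OF assms(1)] is_char_imp_hom_on[OF assms(2)]
    unfolding hom_on_def by (simp add: mult_ac)
  ultimately show ?thesis using is_char_if_trivial_on by blast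
qed

lemma is_char_inverse:
  assumes "is_char v f"
  shows "is_char v (\<lambda>x. inverse (f x))"
proof -
  obtain n where "trivial_on f n" using assms is_char_imp_trivial_on by blast
  then have "trivial_on (\<lambda>x. inverse (f x)) n" by (simp add: trivial_on_def)
  moreover have "hom_on (- {0}) (\<lambda>x. inverse (f x))"
    using is_char_imp_hom_on[OF assms] unfolding hom_on_def by simp
  ultimately show ?thesis using is_char_if_trivial_on by blast
qed

lemma is_char_divide: "is_char v f \<Longrightarrow> is_char v g \<Longrightarrow> is_char v (\<lambda>x. f x / g x)"
  using is_char_mult[of f "\<lambda>x. inverse (g x)"] is_char_inverse by (simp add: divide_inverse)

lemma is_char_unramified:
  assumes "c \<noteq> 0"
  shows "is_char v (\<lambda>x. c powi v x)"
proof (rule is_char_if_trivial_on)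
  show "hom_on (- {0}) (\<lambda>x. c powi v x)"
    using assms by (simp add: hom_on_def v_mult power_int_add)
  show "trivial_on (\<lambda>x. c powi v x) 0"
    by (simp add: trivial_on_def U_0_iff)
qed

lemma cond_le_iff_char: "is_char v f \<Longrightarrow> cond v f \<le> m \<longleftrightarrow> trivial_on f m"
  using cond_le_iff is_char_imp_trivial_on by blast

lemma cond_mult_le:
  assumes "is_char v f" "is_char v g"
  shows "cond v (\<lambda>x. f x * g x) \<le> max (cond v f) (cond v g)"
  using assms is_char_mult trivial_on_mult cond_le_iff_char by (metis max.cobounded1 max.cobounded2)

lemma cond_mult_eq_max:
  assumes f: "is_char v f" and g: "is_char v g" and ne: "cond v f \<noteq> cond v g"
  shows "cond v (\<lambda>x. f x * g x) = max (cond v f) (cond v g)"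
proof -
  have less: "cond v (\<lambda>x. f x * g x) = cond v g"
    if f: "is_char v f" and g: "is_char v g" and lt: "cond v f < cond v g" for f g
  proof (rule ccontr)
    assume "cond v (\<lambda>x. f x * g x) \<noteq> cond v g"
    then have "cond v (\<lambda>x. f x * g x) < cond v g"
      using cond_mult_le[OF f g] lt by simp
    then obtain i where i: "cond v g = Suc i" "trivial_on (\<lambda>x. f x * g x) i" "trivial_on f i"
      using lt cond_le_iff_char is_char_mult[OF f g] f
      by (metis Suc_le_eq lessE less_Suc_eq_le)
    \<comment> \<open>then \<open>g = (f g) / f\<close> would be trivial on \<open>U\<^sub>i\<close> as well\<close>
    have "trivial_on g i"
      using i(2,3) is_char_nonzero[OF f] unit_if_in_U unfolding trivial_on_def by fastforce
    then show False using i(1) cond_le_iff_char[OF g, of i] by simp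
  qed
  show ?thesis
  proof (cases "cond v f < cond v g")
    case True
    then show ?thesis using less[OF f g] by simp
  next
    case False
    then show ?thesis using less[OF g f] ne by (simp add: mult.commute)
  qed
qed

lemma cond_divide_eq_max:
  assumes "is_char v f" "is_char v g" "cond v f \<noteq> cond v g"
  shows "cond v (\<lambda>x. f x / g x) = max (cond v f) (cond v g)"
  using cond_mult_eq_max[of f "\<lambda>x. inverse (g x)"] assms is_char_inverse cond_inverse[of g]
  by (simp add: divide_inverse)

text \<open>Twisting by \<open>(\<chi> \<pi>)\<^bsup>v(x)\<^esup>\<close> normalises \<open>\<sigma> / \<chi>\<close> at \<open>\<pi>\<close> without changing it on units.\<close>

lemma exists_charX_twist:
  assumes \<sigma>: "\<sigma> \<in> charX v \<pi>" and \<chi>: "is_char v \<chi>"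
  obtains \<mu> where "\<mu> \<in> charX v \<pi>" "\<And>x. x \<in> U 0 \<Longrightarrow> \<mu> x = \<sigma> x / \<chi> x"
proof
  let ?\<mu> = "\<lambda>x. \<sigma> x * \<chi> \<pi> powi v x / \<chi> x"
  have c: "\<chi> \<pi> \<noteq> 0" using is_char_nonzero[OF \<chi> pi_nonzero] .
  have "is_char v ?\<mu>"
    using \<sigma> is_char_mult is_char_divide is_char_unramified[OF c] \<chi> by (auto simp: charX_def)
  then show "?\<mu> \<in> charX v \<pi>" using \<sigma> c v_pi by (simp add: charX_def)
  show "?\<mu> x = \<sigma> x / \<chi> x" if "x \<in> U 0" for x
    using that U_0_iff by simp
qed

end

section \<open>Separating points by few functions\<close>

lemma card_le_of_powers_separating:
  fixes P :: "('x \<Rightarrow> complex) set"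
  assumes gen: "\<And>g. g \<in> P \<Longrightarrow> \<exists>i. \<forall>x\<in>V. g x = g0 x ^ i"
    and root: "\<forall>x\<in>V. g0 x ^ m = 1" "0 < m"
    and sep: "\<And>x y. x \<in> X \<Longrightarrow> y \<in> X \<Longrightarrow> x \<noteq> y \<Longrightarrow> \<exists>f\<in>P. f x \<noteq> f y"
    and XV: "X \<subseteq> V"
  shows "card X \<le> m"
proof -
  have "inj_on g0 X"
  proof (rule inj_onI, rule ccontr)
    fix a b assume ab: "a \<in> X" "b \<in> X" "g0 a = g0 b" "a \<noteq> b"
    then obtain g where g: "g \<in> P" "g a \<noteq> g b" using sep by blast
    then obtain i where "\<forall>x\<in>V. g x = g0 x ^ i" using gen by blast
    then have "g a = g0 a ^ i" "g b = g0 b ^ i" using ab XV by auto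
    then show False using g(2) ab(3) by simp
  qed
  moreover have "g0 ` X \<subseteq> {z. z ^ m = 1}" using root XV by auto
  ultimately have "card X \<le> card {z::complex. z ^ m = 1}"
    using finite_roots_unity[of m] root(2) card_inj_on_le by (metis Suc_leI One_nat_def)
  then show ?thesis using card_roots_unity_eq[OF root(2)] by simp
qed

context
  fixes P :: "('x \<Rightarrow> complex) set" and V X :: "'x set" and e1 e2 :: "'x \<Rightarrow> complex"
  assumes closed: "\<And>f g. f \<in> P \<Longrightarrow> g \<in> P \<Longrightarrow> (\<lambda>x. f x * g x) \<in> P"
    and nonzero: "\<And>f x. f \<in> P \<Longrightarrow> x \<in> V \<Longrightarrow> f x \<noteq> 0"
    and classes: "\<And>f. f \<in> P \<Longrightarrow> (\<forall>x\<in>V. f x = 1) \<or> (\<forall>x\<in>V. f x = e1 x) \<or> (\<forall>x\<in>V. f x = e2 x)"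
    and sep: "\<And>x y. x \<in> X \<Longrightarrow> y \<in> X \<Longrightarrow> x \<noteq> y \<Longrightarrow> \<exists>f\<in>P. f x \<noteq> f y"
    and XV: "X \<subseteq> V"
begin

lemma separating_classes_order_three:
  assumes f: "f \<in> P" "y \<in> V" "f y \<noteq> 1" "f y * f y \<noteq> 1"
  shows "card X \<le> 3" "\<not> (\<forall>x\<in>V. e1 x = e2 x)"
proof -
  define f2 where "f2 x = f x * f x" for x
  have f2: "f2 \<in> P" unfolding f2_def using closed f(1) by blast
  have fy: "f y \<noteq> 0" using nonzero f by blast
  then have ne: "f2 y \<noteq> f y" using f(3) unfolding f2_def by simp
  have "(\<forall>x\<in>V. f x = e1 x) \<or> (\<forall>x\<in>V. f x = e2 x)"
    "(\<forall>x\<in>V. f2 x = e1 x) \<or> (\<forall>x\<in>V. f2 x = e2 x)"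
    using classes[OF f(1)] classes[OF f2] f(2-4) unfolding f2_def by blast+
  then have e: "((\<forall>x\<in>V. f x = e1 x) \<and> (\<forall>x\<in>V. f2 x = e2 x))
      \<or> ((\<forall>x\<in>V. f x = e2 x) \<and> (\<forall>x\<in>V. f2 x = e1 x))"
    using ne f(2) by metis
  then have "e1 y \<noteq> e2 y" using ne f(2) by auto
  then show "\<not> (\<forall>x\<in>V. e1 x = e2 x)" using f(2) by blast
  have classes': "(\<forall>x\<in>V. g x = 1) \<or> (\<forall>x\<in>V. g x = f x) \<or> (\<forall>x\<in>V. g x = f2 x)" if "g \<in> P" for g
    using classes[OF that] e by auto
  have f3: "(\<lambda>x. f2 x * f x) \<in> P" using closed f2 f(1) by blast
  have "f2 y * f y \<noteq> f y" using f(4) fy unfolding f2_def by simp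
  moreover have "f2 y * f y \<noteq> f2 y" using f(3) fy unfolding f2_def by simp
  ultimately have cube: "\<forall>x\<in>V. f x ^ 3 = 1"
    using classes'[OF f3] f(2) unfolding f2_def by (auto simp: power3_eq_cube)
  have "\<exists>i. \<forall>x\<in>V. g x = f x ^ i" if "g \<in> P" for g
    using classes'[OF that] unfolding f2_def by (metis power_0 power_one_right power2_eq_square)
  then show "card X \<le> 3"
    using card_le_of_powers_separating[of P V f 3 X] cube sep XV by simp
qed

lemma separating_classes_involutions:
  assumes sq: "\<And>f y. f \<in> P \<Longrightarrow> y \<in> V \<Longrightarrow> f y * f y = 1"
  shows "card X \<le> 2"
proof (cases "card X \<le> 1")
  case False
  then have "finite X" by (metis card.infinite zero_le)
  then obtain x1 x2 where x: "x1 \<in> X" "x2 \<in> X" "x1 \<noteq> x2"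
    using False card_le_Suc0_iff_eq[of X] by auto
  then obtain g0 where g0: "g0 \<in> P" "g0 x1 \<noteq> g0 x2" using sep by blast
  have g0': "\<not> (\<forall>x\<in>V. g0 x = 1)" using g0 x XV by (metis subsetD)
  \<comment> \<open>a third class would be \<open>g g0\<close>, which is none of \<open>1\<close>, \<open>g\<close>, \<open>g0\<close>\<close>
  have classes': "(\<forall>x\<in>V. g x = 1) \<or> (\<forall>x\<in>V. g x = g0 x)" if g: "g \<in> P" for g
  proof (rule ccontr)
    assume "\<not> ?thesis"
    then obtain z1 z2 where z: "z1 \<in> V" "g z1 \<noteq> 1" "z2 \<in> V" "g z2 \<noteq> g0 z2" by auto
    have h: "(\<lambda>x. g x * g0 x) \<in> P" using closed g g0(1) by blast
    have "g z2 * g0 z2 \<noteq> 1"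
      using z sq[OF g0(1) z(3)] by (metis mult.assoc mult.right_neutral)
    moreover have "g z1 * g0 z1 \<noteq> g0 z1" using z nonzero[OF g0(1) z(1)] by simp
    moreover have "\<not> (\<forall>x\<in>V. g x * g0 x = g x)" using g0' nonzero[OF g] by auto
    moreover have "(\<forall>x\<in>V. g x = e1 x) \<or> (\<forall>x\<in>V. g x = e2 x)" using classes[OF g] z by blast
    moreover have "(\<forall>x\<in>V. g0 x = e1 x) \<or> (\<forall>x\<in>V. g0 x = e2 x)" using classes[OF g0(1)] g0' by blast
    ultimately show False using classes[OF h] z by metis
  qed
  have "\<exists>i. \<forall>x\<in>V. g x = g0 x ^ i" if "g \<in> P" for g
    using classes'[OF that] by (metis power_0 power_one_right)
  moreover have "\<forall>x\<in>V. g0 x ^ 2 = 1" using sq[OF g0(1)] by (simp add: power2_eq_square)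
  ultimately show ?thesis using card_le_of_powers_separating[of P V g0 2 X] sep XV by simp
qed simp

text \<open>A multiplicatively closed family of functions that on \<open>V\<close> takes only the three shapes
  \<open>1\<close>, \<open>e\<^sub>1\<close>, \<open>e\<^sub>2\<close> is a cyclic group of order at most \<open>3\<close>, so it separates at most three points
  (two if \<open>e\<^sub>1 = e\<^sub>2\<close>).\<close>

lemma card_le_if_separating_classes:
  shows "card X \<le> 3" and "(\<forall>x\<in>V. e1 x = e2 x) \<Longrightarrow> card X \<le> 2"
proof -
  have "card X \<le> 3 \<and> ((\<forall>x\<in>V. e1 x = e2 x) \<longrightarrow> card X \<le> 2)"
  proof (cases "\<exists>f\<in>P. \<exists>y\<in>V. f y \<noteq> 1 \<and> f y * f y \<noteq> 1")
    case True
    then show ?thesis using separating_classes_order_three by blast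
  next
    case False
    then have "card X \<le> 2"
      using separating_classes_involutions by (metis mult_1)
    then show ?thesis by simp
  qed
  then show "card X \<le> 3" "(\<forall>x\<in>V. e1 x = e2 x) \<Longrightarrow> card X \<le> 2" by blast+
qed

end

lemma cube_roots_of_unity_product:
  fixes a b c :: complex
  assumes "a ^ 3 = 1" "b ^ 3 = 1" "c ^ 3 = 1" "a \<noteq> 1" "b \<noteq> 1" "c \<noteq> 1" "a \<noteq> b"
  shows "c * a = 1 \<or> c * b = 1"
proof -
  have quadratic: "z * z + z + 1 = 0" if "z ^ 3 = 1" "z \<noteq> 1" for z :: complex
  proof -
    have "(z - 1) * (z * z + z + 1) = 0" using that by (simp add: algebra_simps power3_eq_cube)
    then show ?thesis using that by simp
  qed
  \<comment> \<open>\<open>a\<close> and \<open>b\<close> are the two roots of \<open>z\<^sup>2 + z + 1\<close>, so \<open>a + b = -1\<close> and \<open>a b = 1\<close>\<close>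
  have qa: "a * a + a + 1 = 0" and qb: "b * b + b + 1 = 0" and qc: "c * c + c + 1 = 0"
    using quadratic assms by auto
  have "(a - b) * (a + b + 1) = (a * a + a + 1) - (b * b + b + 1)" by (simp add: algebra_simps)
  then have "(a - b) * (a + b + 1) = 0" using qa qb by simp
  then have s: "a + b + 1 = 0" using assms(7) by simp
  have "a * b = - (a * a + a + 1) + a * (a + b + 1) + 1" by (simp add: algebra_simps)
  then have p: "a * b = 1" using qa s by simp
  have "(c - a) * (c - b) = c * c - (a + b + 1) * c + c + a * b" by (simp add: algebra_simps)
  then have "(c - a) * (c - b) = 0" using s p qc by simp
  then have "c = a \<or> c = b" using qc by simp
  then show ?thesis using p by (auto simp: mult.commute)
qed

section \<open>Residue fields with two or three elements\<close>

context uniformized_local_field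
begin

lemma inverse_in_U_iff: "inverse x \<in> U j \<longleftrightarrow> x \<in> U j"
  using U_inverse[of x j] U_inverse[of "inverse x" j] by auto

lemma divide_in_U_commute: "x / y \<in> U j \<longleftrightarrow> y / x \<in> U j"
  using inverse_in_U_iff[of "x / y" j] by simp

lemma resq_ge_3_if_three_U_classes:
  assumes j: "0 < j" and U: "a \<in> U j" "b \<in> U j" "c \<in> U j"
    and ne: "a / b \<notin> U (Suc j)" "a / c \<notin> U (Suc j)" "b / c \<notin> U (Suc j)"
  shows "3 \<le> resq v"
proof -
  have "a \<noteq> b" "a \<noteq> c" "b \<noteq> c"
    using ne U unit_if_in_U by (metis one_in_U divide_self)+
  then have "card {a, b, c} = 3" by simp
  moreover have "b / a \<notin> U (Suc j)" "c / a \<notin> U (Suc j)" "c / b \<notin> U (Suc j)"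
    using ne divide_in_U_commute by blast+
  then have "card {a, b, c} \<le> resq v"
    using U ne by (intro card_le_resq_U[OF j]) (auto simp: pairwise_def)
  ultimately show ?thesis by simp
qed

lemma resq_ge_4_if_four_U_classes:
  assumes j: "0 < j" and U: "a \<in> U j" "b \<in> U j" "c \<in> U j" "d \<in> U j"
    and ne: "a / b \<notin> U (Suc j)" "a / c \<notin> U (Suc j)" "a / d \<notin> U (Suc j)"
      "b / c \<notin> U (Suc j)" "b / d \<notin> U (Suc j)" "c / d \<notin> U (Suc j)"
  shows "4 \<le> resq v"
proof -
  have "a \<noteq> b" "a \<noteq> c" "a \<noteq> d" "b \<noteq> c" "b \<noteq> d" "c \<noteq> d"
    using ne U unit_if_in_U by (metis one_in_U divide_self)+
  then have "card {a, b, c, d} = 4" by simp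
  moreover have "b / a \<notin> U (Suc j)" "c / a \<notin> U (Suc j)" "d / a \<notin> U (Suc j)"
    "c / b \<notin> U (Suc j)" "d / b \<notin> U (Suc j)" "d / c \<notin> U (Suc j)"
    using ne divide_in_U_commute by blast+
  then have "card {a, b, c, d} \<le> resq v"
    using U ne by (intro card_le_resq_U[OF j]) (auto simp: pairwise_def)
  ultimately show ?thesis by simp
qed

lemma resq_2_divide_in_U_Suc:
  assumes q: "resq v = 2" and j: "0 < j"
    and x: "x \<in> U j" "x \<notin> U (Suc j)" and y: "y \<in> U j" "y \<notin> U (Suc j)"
  shows "y / x \<in> U (Suc j)"
proof (rule ccontr)
  assume yx: "y / x \<notin> U (Suc j)"
  then have "x / y \<notin> U (Suc j)" using divide_in_U_commute by blast
  moreover have "1 / x \<notin> U (Suc j)" "1 / y \<notin> U (Suc j)"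
    using inverse_in_U_iff[of x] inverse_in_U_iff[of y] x(2) y(2) by (simp_all add: inverse_eq_divide)
  ultimately have "3 \<le> resq v"
    using resq_ge_3_if_three_U_classes[OF j one_in_U x(1) y(1)] by simp
  then show False using q by simp
qed

lemma resq_2_char_eq_minus_one:
  assumes q: "resq v = 2" and j: "0 < j" and f: "is_char v f" "cond v f = Suc j"
    and u: "u \<in> U j" "u \<notin> U (Suc j)"
  shows "f u = -1"
proof -
  have triv: "trivial_on f (Suc j)" "\<not> trivial_on f j"
    using cond_eq_Suc_iff[OF is_char_imp_trivial_on[OF f(1)], of j] f(2) by simp_all
  then obtain x where x: "x \<in> U j" "f x \<noteq> 1" unfolding trivial_on_def by blast
  have x': "x \<notin> U (Suc j)" using x triv(1) unfolding trivial_on_def by blast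
  have f_divide: "f (a / b) = f a / f b" if "a \<in> U j" "b \<in> U j" for a b
    using hom_on_divide[OF mult_subgroup_nonzero is_char_imp_hom_on[OF f(1)]] that unit_if_in_U
    by simp
  have fx0: "f x \<noteq> 0" using is_char_nonzero[OF f(1)] x unit_if_in_U by blast
  have xi: "inverse x \<in> U j" "inverse x \<notin> U (Suc j)"
    using inverse_in_U_iff x(1) x' by simp_all
  then have "inverse x / x \<in> U (Suc j)"
    by (rule resq_2_divide_in_U_Suc[OF q j x(1) x'])
  then have "f (inverse x) / f x = 1"
    using triv(1) f_divide[OF xi(1) x(1)] unfolding trivial_on_def by simp
  moreover have "f (inverse x) = inverse (f x)"
    using hom_on_inverse[OF mult_subgroup_nonzero is_char_imp_hom_on[OF f(1)]] x unit_if_in_U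
    by simp
  ultimately have "f x * f x = 1" using fx0 by (simp add: field_simps)
  then have "f x = -1" using x(2) by (simp add: square_eq_1_iff)
  moreover have "u / x \<in> U (Suc j)" using resq_2_divide_in_U_Suc[OF q j x(1) x' u] .
  then have "f u / f x = 1" using triv(1) f_divide[OF u(1) x(1)] unfolding trivial_on_def by simp
  ultimately show ?thesis using fx0 by (simp add: minus_equation_iff[of "f u"])
qed

text \<open>For \<open>q = 2\<close> two characters of the same conductor \<open>\<ge> 2\<close> agree on \<open>U\<^sub>j\<close>, both being \<open>-1\<close> off \<open>U\<^sub>j\<^sub>+\<^sub>1\<close>.\<close>

lemma resq_2_cond_mult_le:
  assumes q: "resq v = 2" and j: "0 < j" and f: "is_char v f" "cond v f = Suc j"
    and g: "is_char v g" "cond v g = Suc j"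
  shows "cond v (\<lambda>x. f x * g x) \<le> j"
proof -
  have "trivial_on f (Suc j)" "trivial_on g (Suc j)"
    using cond_le_iff_char[OF f(1), of "Suc j"] cond_le_iff_char[OF g(1), of "Suc j"] f(2) g(2)
    by simp_all
  have "f u * g u = 1" if u: "u \<in> U j" for u
  proof (cases "u \<in> U (Suc j)")
    case True
    then show ?thesis using \<open>trivial_on f (Suc j)\<close> \<open>trivial_on g (Suc j)\<close>
      unfolding trivial_on_def by simp
  next
    case False
    then show ?thesis
      using resq_2_char_eq_minus_one[OF q j f u] resq_2_char_eq_minus_one[OF q j g u] by simp
  qed
  then have "trivial_on (\<lambda>x. f x * g x) j" unfolding trivial_on_def by blast
  then show ?thesis using cond_le_iff_char is_char_mult f(1) g(1) by blast
qed

lemma resq_2_cond_ne_1: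
  assumes "resq v = 2" "is_char v f"
  shows "cond v f \<noteq> 1"
proof
  assume "cond v f = 1"
  then have "trivial_on f 1" "\<not> trivial_on f 0"
    using assms(2) cond_le_iff_char[OF assms(2)] by (auto simp: le_Suc_eq)
  then show False
    using U_0_subset_U_1_if_resq_2[OF assms(1)] unfolding trivial_on_def by blast
qed

lemma resq_2_cond_mult_eq_0:
  assumes q: "resq v = 2" and f: "is_char v f" "cond v f = 2" and g: "is_char v g" "cond v g = 2"
  shows "cond v (\<lambda>x. f x * g x) = 0"
  using resq_2_cond_mult_le[OF q _ f(1) _ g(1), of 1] f(2) g(2)
    resq_2_cond_ne_1[OF q is_char_mult[OF f(1) g(1)]] by simp

lemma resq_3_square_notin_U_Suc:
  assumes q: "resq v = 3" and j: "0 < j" and x: "x \<in> U j" "x \<notin> U (Suc j)"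
  shows "x * x \<notin> U (Suc j)"
proof
  assume sq: "x * x \<in> U (Suc j)"
  obtain T where T: "card T = 3" "T \<subseteq> U j" "pairwise (\<lambda>x y. x / y \<notin> U (Suc j)) T"
    using incongruent_subset_U[OF j] q by auto
  then obtain a b c where abc: "T = {a, b, c}" "a \<noteq> b" "a \<noteq> c" "b \<noteq> c"
    by (metis card_3_iff)
  have unique: "\<not> (s / r \<in> U (Suc j) \<and> t / r \<in> U (Suc j))"
    if "s \<in> T" "t \<in> T" "s \<noteq> t" "r \<in> U j" for s t r
  proof
    assume "s / r \<in> U (Suc j) \<and> t / r \<in> U (Suc j)"
    then have "(s / r) / (t / r) \<in> U (Suc j)" using U_divide by blast
    then have "s / t \<in> U (Suc j)" using that(4) unit_if_in_U by simp
    then show False using T(3) that(1-3) unfolding pairwise_def by blast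
  qed
  \<comment> \<open>of three distinct classes, one is neither that of \<open>1\<close> nor that of \<open>x\<close>\<close>
  have "\<exists>z\<in>T. z / 1 \<notin> U (Suc j) \<and> z / x \<notin> U (Suc j)"
    using abc unique[of a b 1] unique[of a c 1] unique[of b c 1] unique[of a b x] unique[of a c x]
      unique[of b c x] x(1) by auto
  then obtain z where z: "z \<in> U j" "z \<notin> U (Suc j)" "z / x \<notin> U (Suc j)"
    using T(2) by auto
  have x0: "x \<noteq> 0" and z0: "z \<noteq> 0" using x(1) z(1) unit_if_in_U by blast+
  have "x * z / (x * x) = z / x" using x0 by simp
  then have xz: "x * z \<notin> U (Suc j)" using U_divide[OF _ sq] z(3) by metis
  have inv: "1 / w \<notin> U (Suc j)" if "w \<notin> U (Suc j)" for w
    using that inverse_in_U_iff[of w] by (simp add: inverse_eq_divide)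
  have "x / z \<notin> U (Suc j)" using z(3) divide_in_U_commute by blast
  moreover have "x / (x * z) \<notin> U (Suc j)" "z / (x * z) \<notin> U (Suc j)"
    using inv[OF z(2)] inv[OF x(2)] x0 z0 by simp_all
  ultimately have "4 \<le> resq v"
    using resq_ge_4_if_four_U_classes[OF j x(1) z(1) U_mult[OF x(1) z(1)] one_in_U] x(2) z(2) xz
    by simp
  then show False using q by simp
qed

lemma resq_3_U_classes:
  assumes q: "resq v = 3" and j: "0 < j" and x: "x \<in> U j" "x \<notin> U (Suc j)"
  shows "\<And>y. y \<in> U j \<Longrightarrow> y \<in> U (Suc j) \<or> y / x \<in> U (Suc j) \<or> y * x \<in> U (Suc j)"
    and "x ^ 3 \<in> U (Suc j)"
proof -
  have sq: "x * x \<notin> U (Suc j)" using resq_3_square_notin_U_Suc[OF assms] .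
  have x0: "x \<noteq> 0" using x unit_if_in_U by blast
  show classes: "y \<in> U (Suc j) \<or> y / x \<in> U (Suc j) \<or> y * x \<in> U (Suc j)" if y: "y \<in> U j" for y
  proof (rule ccontr)
    assume neg: "\<not> ?thesis"
    have inv: "1 / w \<notin> U (Suc j)" if "w \<notin> U (Suc j)" for w
      using that inverse_in_U_iff[of w] by (simp add: inverse_eq_divide)
    have "1 / inverse x \<notin> U (Suc j)" "x / inverse x \<notin> U (Suc j)"
      using x(2) sq by (simp_all add: divide_inverse)
    moreover have "x / y \<notin> U (Suc j)" "inverse x / y \<notin> U (Suc j)"
      using neg divide_in_U_commute[of x y] divide_in_U_commute[of "inverse x" y]
      by (simp_all add: divide_inverse)
    ultimately have "4 \<le> resq v"
      using resq_ge_4_if_four_U_classes[OF j one_in_U x(1) U_inverse[OF x(1)] y]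
        inv[OF x(2)] inv[of y] neg by blast
    then show False using q by simp
  qed
  have "x * x / x = x" using x0 by simp
  then show "x ^ 3 \<in> U (Suc j)"
    using classes[OF U_mult[OF x(1) x(1)]] sq x(2) by (simp add: power3_eq_cube)
qed

lemma resq_3_char_value:
  assumes q: "resq v = 3" and j: "0 < j" and x: "x \<in> U j" "x \<notin> U (Suc j)"
    and f: "is_char v f" "cond v f \<le> Suc j"
  shows "f x ^ 3 = 1" and "cond v f \<le> j \<longleftrightarrow> f x = 1"
proof -
  have hom: "hom_on (- {0}) f" using is_char_imp_hom_on[OF f(1)] .
  have triv: "trivial_on f (Suc j)" using f cond_le_iff_char by blast
  have x0: "x \<noteq> 0" using x unit_if_in_U by blast
  show "f x ^ 3 = 1"
    using triv resq_3_U_classes(2)[OF q j x] hom_on_power[OF mult_subgroup_nonzero hom, of x 3] x0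
    unfolding trivial_on_def by simp
  have "trivial_on f j" if "f x = 1"
    unfolding trivial_on_def
  proof
    fix y assume y: "y \<in> U j"
    have y0: "y \<noteq> 0" using y unit_if_in_U by blast
    have "f (y / x) = f y" "f (y * x) = f y"
      using hom_on_divide[OF mult_subgroup_nonzero hom, of y x] hom x0 y0 that
      unfolding hom_on_def by simp_all
    moreover have "f (y / x) = 1 \<or> f y = 1 \<or> f (y * x) = 1"
      using resq_3_U_classes(1)[OF q j x y] triv unfolding trivial_on_def by blast
    ultimately show "f y = 1" by auto
  qed
  then show "cond v f \<le> j \<longleftrightarrow> f x = 1"
    using cond_le_iff_char[OF f(1)] x(1) unfolding trivial_on_def by blast
qed

end

section \<open>Twisting two characters of equal conductor\<close>

lemma Max_eq_if_attained:
  fixes S :: "nat set"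
  assumes "\<And>s. s \<in> S \<Longrightarrow> s \<le> m" "m \<in> S"
  shows "Max S = m"
proof (rule Max_eqI)
  show "finite S" using assms(1) by (meson finite_atMost finite_subset atMost_iff subsetI)
qed (use assms in auto)

context uniformized_local_field
begin

lemma is_char_if_in_charX: "\<mu> \<in> charX v \<pi> \<Longrightarrow> is_char v \<mu>"
  by (simp add: charX_def)

lemma cond_eq_Suc_char:
  "is_char v f \<Longrightarrow> cond v f = Suc j \<longleftrightarrow> trivial_on f (Suc j) \<and> \<not> trivial_on f j"
  using cond_eq_Suc_iff is_char_imp_trivial_on by blast

lemma exists_charX_separating_level:
  assumes "x \<in> U j" "y \<in> U j" "x / y \<notin> U (Suc j)"
  obtains \<mu> where "\<mu> \<in> charX v \<pi>" "trivial_on \<mu> (Suc j)" "\<mu> x \<noteq> \<mu> y"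
proof -
  have xy: "x \<noteq> 0" "y \<noteq> 0" using assms unit_if_in_U by blast+
  have "x / y \<in> U 0" using U_divide[OF assms(1,2)] U_antimono by blast
  then obtain \<mu> where \<mu>: "\<mu> \<in> charX v \<pi>" "trivial_on \<mu> (Suc j)" "\<mu> (x / y) \<noteq> 1"
    using exists_charX_separating assms(3) by blast
  have "\<mu> (x / y) = \<mu> x / \<mu> y"
    using hom_on_divide[OF mult_subgroup_nonzero is_char_imp_hom_on] \<mu>(1) xy
    by (simp add: is_char_if_in_charX)
  moreover have "\<mu> y \<noteq> 0"
    using is_char_nonzero[OF is_char_if_in_charX[OF \<mu>(1)] xy(2)] .
  ultimately have "\<mu> x \<noteq> \<mu> y" using \<mu>(3) by auto
  then show ?thesis using that \<mu>(1,2) by blast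
qed

lemma exists_twist_with_conds:
  assumes \<sigma>: "\<sigma> \<in> charX v \<pi>" and \<chi>: "is_char v \<chi>" "cond v \<sigma> < cond v \<chi>" and \<psi>: "is_char v \<psi>"
  obtains \<mu> where "\<mu> \<in> charX v \<pi>" "cond v \<mu> = cond v \<chi>" "cond v (\<lambda>x. \<mu> x * \<chi> x) = cond v \<sigma>"
    "cond v (\<lambda>x. \<mu> x * \<psi> x) = cond v (\<lambda>x. \<sigma> x * (\<psi> x / \<chi> x))"
proof -
  obtain \<mu> where \<mu>: "\<mu> \<in> charX v \<pi>" "\<And>x. x \<in> U 0 \<Longrightarrow> \<mu> x = \<sigma> x / \<chi> x"
    by (rule exists_charX_twist[OF \<sigma> \<chi>(1)]) blast
  have s: "is_char v \<sigma>" using \<sigma> is_char_if_in_charX by blast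
  have nz: "\<chi> x \<noteq> 0" if "x \<in> U 0" for x
    using is_char_nonzero[OF \<chi>(1)] that U_0_iff by blast
  have "cond v \<mu> = cond v (\<lambda>x. \<sigma> x / \<chi> x)" using \<mu>(2) by (rule cond_cong)
  also have "\<dots> = cond v \<chi>" using cond_divide_eq_max[OF s \<chi>(1)] \<chi>(2) by simp
  finally have "cond v \<mu> = cond v \<chi>" .
  moreover have "cond v (\<lambda>x. \<mu> x * \<chi> x) = cond v \<sigma>"
    using \<mu>(2) nz by (intro cond_cong) simp
  moreover have "cond v (\<lambda>x. \<mu> x * \<psi> x) = cond v (\<lambda>x. \<sigma> x * (\<psi> x / \<chi> x))"
    using \<mu>(2) by (intro cond_cong) simp
  ultimately show ?thesis using that \<mu>(1) by blast
qed

end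

locale char_pair = uniformized_local_field v \<pi> for v :: "'a::field_char_0 \<Rightarrow> int" and \<pi> :: 'a +
  fixes \<chi>1 \<chi>2 :: "'a \<Rightarrow> complex" and k :: nat
  assumes char1: "is_char v \<chi>1" and char2: "is_char v \<chi>2" and k: "2 \<le> k"
    and cond1: "cond v \<chi>1 = k" and cond2: "cond v \<chi>2 = k"
begin

lemma cond_twist_le:
  assumes "\<mu> \<in> charX v \<pi>" "cond v \<mu> = k"
  shows "cond v (\<lambda>x. \<mu> x * \<chi>1 x) \<le> k" "cond v (\<lambda>x. \<mu> x * \<chi>2 x) \<le> k"
  using cond_mult_le[OF is_char_if_in_charX[OF assms(1)]] char1 char2 assms(2) cond1 cond2
  by (metis max.idem)+

lemma cond_twist_ratio:
  assumes "\<mu> \<in> charX v \<pi>"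
  shows "cond v (\<lambda>x. (\<mu> x * \<chi>1 x) / (\<mu> x * \<chi>2 x)) = cond v (\<lambda>x. \<chi>1 x / \<chi>2 x)"
  using is_char_nonzero[OF is_char_if_in_charX[OF assms]] U_0_iff by (intro cond_cong) simp

lemma level_k_classes:
  assumes none: "\<not> (\<exists>\<mu>\<in>charX v \<pi>. cond v \<mu> = k \<and> cond v (\<lambda>x. \<mu> x * \<chi>1 x) = k
                         \<and> cond v (\<lambda>x. \<mu> x * \<chi>2 x) = k)"
    and \<mu>: "\<mu> \<in> charX v \<pi>" "trivial_on \<mu> k"
  shows "(\<forall>x\<in>U (k - 1). \<mu> x = 1) \<or> (\<forall>x\<in>U (k - 1). \<mu> x = inverse (\<chi>1 x))
    \<or> (\<forall>x\<in>U (k - 1). \<mu> x = inverse (\<chi>2 x))"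
proof (rule ccontr)
  assume "\<not> ?thesis"
  then have n: "\<not> trivial_on \<mu> (k - 1)" "\<not> trivial_on (\<lambda>x. \<mu> x * \<chi>1 x) (k - 1)"
    "\<not> trivial_on (\<lambda>x. \<mu> x * \<chi>2 x) (k - 1)"
    using is_char_nonzero[OF char1] is_char_nonzero[OF char2] unit_if_in_U
    unfolding trivial_on_def by (auto simp: field_simps)
  have k': "k = Suc (k - 1)" using k by simp
  have "trivial_on \<chi>1 k" "trivial_on \<chi>2 k"
    using cond_le_iff_char[OF char1, of k] cond_le_iff_char[OF char2, of k] cond1 cond2 by simp_all
  then have "cond v \<mu> = k" "cond v (\<lambda>x. \<mu> x * \<chi>1 x) = k" "cond v (\<lambda>x. \<mu> x * \<chi>2 x) = k"
    using n \<mu> trivial_on_mult char1 char2 is_char_mult is_char_if_in_charX cond_eq_Suc_char[of _ "k - 1"]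
    by (metis k')+
  then show False using none \<mu>(1) by blast
qed

end

context char_pair
begin

text \<open>Without such a twist, the characters of level \<open>k\<close> are \<open>1\<close>, \<open>\<chi>\<^sub>1\<^sup>-\<^sup>1\<close> or \<open>\<chi>\<^sub>2\<^sup>-\<^sup>1\<close> on
  \<open>U\<^sub>k\<^sub>-\<^sub>1\<close>, yet they separate its classes modulo \<open>U\<^sub>k\<close>.\<close>

lemma card_U_classes_le_if_no_twist:
  assumes none: "\<not> (\<exists>\<mu>\<in>charX v \<pi>. cond v \<mu> = k \<and> cond v (\<lambda>x. \<mu> x * \<chi>1 x) = k
                         \<and> cond v (\<lambda>x. \<mu> x * \<chi>2 x) = k)"
    and T: "T \<subseteq> U (k - 1)" "pairwise (\<lambda>x y. x / y \<notin> U k) T"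
  shows "card T \<le> 3" and "\<forall>x\<in>U (k - 1). \<chi>1 x = \<chi>2 x \<Longrightarrow> card T \<le> 2"
proof -
  define P where "P = {\<mu> \<in> charX v \<pi>. trivial_on \<mu> k}"
  have closed: "(\<lambda>x. f x * g x) \<in> P" if "f \<in> P" "g \<in> P" for f g
    using that unfolding P_def charX_def using is_char_mult trivial_on_mult by auto
  have nonzero: "f x \<noteq> 0" if "f \<in> P" "x \<in> U (k - 1)" for f x
    using that unfolding P_def using is_char_nonzero is_char_if_in_charX unit_if_in_U by blast
  have classes: "(\<forall>x\<in>U (k - 1). f x = 1) \<or> (\<forall>x\<in>U (k - 1). f x = inverse (\<chi>1 x))
      \<or> (\<forall>x\<in>U (k - 1). f x = inverse (\<chi>2 x))" if "f \<in> P" for f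
    using that level_k_classes[OF none] unfolding P_def by blast
  have separating: "\<exists>f\<in>P. f x \<noteq> f y" if "x \<in> T" "y \<in> T" "x \<noteq> y" for x y
  proof -
    have "x \<in> U (k - 1)" "y \<in> U (k - 1)" "x / y \<notin> U (Suc (k - 1))"
      using that T k unfolding pairwise_def by auto
    then obtain \<mu> where "\<mu> \<in> charX v \<pi>" "trivial_on \<mu> (Suc (k - 1))" "\<mu> x \<noteq> \<mu> y"
      by (rule exists_charX_separating_level)
    then show ?thesis unfolding P_def using k by auto
  qed
  show "card T \<le> 3"
    by (rule card_le_if_separating_classes(1)[of P "U (k - 1)" "\<lambda>x. inverse (\<chi>1 x)"
          "\<lambda>x. inverse (\<chi>2 x)"]) (fact closed nonzero classes separating T(1))+
  assume "\<forall>x\<in>U (k - 1). \<chi>1 x = \<chi>2 x"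
  then have eq: "\<forall>x\<in>U (k - 1). inverse (\<chi>1 x) = inverse (\<chi>2 x)" by simp
  show "card T \<le> 2"
    by (rule card_le_if_separating_classes(2)[of P "U (k - 1)" "\<lambda>x. inverse (\<chi>1 x)"
          "\<lambda>x. inverse (\<chi>2 x)"]) (fact closed nonzero classes separating T(1) eq)+
qed

lemma exists_twist_all_cond_k:
  assumes q: "3 < resq v \<or> (resq v = 3 \<and> cond v (\<lambda>x. \<chi>1 x / \<chi>2 x) < k)"
  shows "\<exists>\<mu>\<in>charX v \<pi>. cond v \<mu> = k \<and> cond v (\<lambda>x. \<mu> x * \<chi>1 x) = k
           \<and> cond v (\<lambda>x. \<mu> x * \<chi>2 x) = k"
proof (rule ccontr)
  assume none: "\<not> ?thesis"
  have j: "0 < k - 1" "Suc (k - 1) = k" using k by auto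
  define n where "n = (if 3 < resq v then 4 else 3 :: nat)"
  have "n \<le> resq v" using q unfolding n_def by auto
  then obtain T where T: "card T = n" "T \<subseteq> U (k - 1)" "pairwise (\<lambda>x y. x / y \<notin> U k) T"
    using incongruent_subset_U[OF j(1)] j(2) by metis
  show False
  proof (cases "3 < resq v")
    case True
    then show False using card_U_classes_le_if_no_twist(1)[OF none T(2,3)] T(1)
      unfolding n_def by simp
  next
    case False
    then have "cond v (\<lambda>x. \<chi>1 x / \<chi>2 x) \<le> k - 1" using q by auto
    then have "trivial_on (\<lambda>x. \<chi>1 x / \<chi>2 x) (k - 1)"
      using cond_le_iff_char[OF is_char_divide[OF char1 char2]] by simp
    then have "\<forall>x\<in>U (k - 1). \<chi>1 x = \<chi>2 x"
      using is_char_nonzero[OF char2] unit_if_in_U unfolding trivial_on_def by fastforce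
    then show False using card_U_classes_le_if_no_twist(2)[OF none T(2,3)] T(1) False
      unfolding n_def by simp
  qed
qed

lemma resq_3_not_both_cond_k:
  assumes q: "resq v = 3" and c12: "cond v (\<lambda>x. \<chi>1 x / \<chi>2 x) = k"
    and \<mu>: "\<mu> \<in> charX v \<pi>" "cond v \<mu> = k"
  shows "\<not> (cond v (\<lambda>x. \<mu> x * \<chi>1 x) = k \<and> cond v (\<lambda>x. \<mu> x * \<chi>2 x) = k)"
proof
  assume both: "cond v (\<lambda>x. \<mu> x * \<chi>1 x) = k \<and> cond v (\<lambda>x. \<mu> x * \<chi>2 x) = k"
  define j where "j = k - 1"
  have j: "0 < j" "Suc j = k" using k unfolding j_def by auto
  define x where "x = 1 + \<pi> ^ j"
  have x: "x \<in> U j" "x \<notin> U (Suc j)" unfolding x_def using pi_power_in_U_notin_U_Suc[OF j(1)] .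
  \<comment> \<open>a character of conductor exactly \<open>k\<close> takes a primitive cube root of unity at \<open>x\<close>\<close>
  have val: "f x ^ 3 = 1" "f x \<noteq> 1" if "is_char v f" "cond v f = k" for f
    using resq_3_char_value[OF q j(1) x that(1)] that(2) j(2) by auto
  have m: "is_char v \<mu>" using is_char_if_in_charX[OF \<mu>(1)] .
  have "\<chi>1 x / \<chi>2 x \<noteq> 1"
    using val[OF is_char_divide[OF char1 char2] c12] by simp
  moreover have "\<chi>2 x \<noteq> 0" using is_char_nonzero[OF char2] x(1) unit_if_in_U by blast
  ultimately have "\<chi>1 x \<noteq> \<chi>2 x" by auto
  then have "\<mu> x * \<chi>1 x = 1 \<or> \<mu> x * \<chi>2 x = 1"
    using cube_roots_of_unity_product val[OF char1 cond1] val[OF char2 cond2] val[OF m \<mu>(2)] by blast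
  then show False
    using val(2)[OF is_char_mult[OF m char1]] val(2)[OF is_char_mult[OF m char2]] both by blast
qed

lemma resq_3_max_cond_sum:
  assumes q: "resq v = 3" and c12: "cond v (\<lambda>x. \<chi>1 x / \<chi>2 x) = k"
  shows "Max {cond v (\<lambda>x. \<mu> x * \<chi>1 x) + cond v (\<lambda>x. \<mu> x * \<chi>2 x) | \<mu>. \<mu> \<in> charX' v \<pi> k}
    = 2 * k - 1"
proof (rule Max_eq_if_attained)
  fix s assume "s \<in> {cond v (\<lambda>x. \<mu> x * \<chi>1 x) + cond v (\<lambda>x. \<mu> x * \<chi>2 x) | \<mu>. \<mu> \<in> charX' v \<pi> k}"
  then obtain \<mu> where \<mu>: "\<mu> \<in> charX v \<pi>" "cond v \<mu> = k"
    and s: "s = cond v (\<lambda>x. \<mu> x * \<chi>1 x) + cond v (\<lambda>x. \<mu> x * \<chi>2 x)"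
    unfolding charX'_def by blast
  show "s \<le> 2 * k - 1"
    using cond_twist_le[OF \<mu>] resq_3_not_both_cond_k[OF q c12 \<mu>] s by linarith
next
  have "k - 1 \<noteq> 1 \<or> 3 \<le> resq v" using q by simp
  then obtain \<sigma> where \<sigma>: "\<sigma> \<in> charX v \<pi>" "cond v \<sigma> = k - 1"
    by (rule exists_charX_cond)
  obtain \<mu> where \<mu>: "\<mu> \<in> charX v \<pi>" "cond v \<mu> = k" "cond v (\<lambda>x. \<mu> x * \<chi>1 x) = k - 1"
    "cond v (\<lambda>x. \<mu> x * \<chi>2 x) = cond v (\<lambda>x. \<sigma> x * (\<chi>2 x / \<chi>1 x))"
    using exists_twist_with_conds[OF \<sigma>(1) char1 _ char2] \<sigma>(2) cond1 k by auto
  have "cond v (\<lambda>x. \<sigma> x * (\<chi>2 x / \<chi>1 x)) = k"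
    using cond_mult_eq_max[OF is_char_if_in_charX[OF \<sigma>(1)] is_char_divide[OF char2 char1]]
      \<sigma>(2) c12 cond_divide_commute[of \<chi>2 \<chi>1] k by simp
  then have "(k - 1) + k \<in> {cond v (\<lambda>x. \<mu> x * \<chi>1 x) + cond v (\<lambda>x. \<mu> x * \<chi>2 x) | \<mu>. \<mu> \<in> charX' v \<pi> k}"
    using \<mu> unfolding charX'_def by force
  moreover have "2 * k - 1 = (k - 1) + k" using k by simp
  ultimately show "2 * k - 1 \<in> {cond v (\<lambda>x. \<mu> x * \<chi>1 x) + cond v (\<lambda>x. \<mu> x * \<chi>2 x) | \<mu>. \<mu> \<in> charX' v \<pi> k}"
    by (simp only:)
qed

end

context char_pair
begin

lemma resq_2_exists_twist_cond_pred:
  assumes q: "resq v = 2" and c12: "cond v (\<lambda>x. \<chi>1 x / \<chi>2 x) < k - 1" and k3: "2 < k"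
  shows "\<exists>\<mu>\<in>charX v \<pi>. cond v \<mu> = k \<and> cond v (\<lambda>x. \<mu> x * \<chi>1 x) = k - 1
           \<and> cond v (\<lambda>x. \<mu> x * \<chi>2 x) = k - 1"
proof -
  have "k - 1 \<noteq> 1 \<or> 3 \<le> resq v" using k3 by linarith
  then obtain \<sigma> where \<sigma>: "\<sigma> \<in> charX v \<pi>" "cond v \<sigma> = k - 1"
    by (rule exists_charX_cond)
  obtain \<mu> where \<mu>: "\<mu> \<in> charX v \<pi>" "cond v \<mu> = k" "cond v (\<lambda>x. \<mu> x * \<chi>1 x) = k - 1"
    "cond v (\<lambda>x. \<mu> x * \<chi>2 x) = cond v (\<lambda>x. \<sigma> x * (\<chi>2 x / \<chi>1 x))"
    using exists_twist_with_conds[OF \<sigma>(1) char1 _ char2] \<sigma>(2) cond1 k by auto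
  have "cond v (\<lambda>x. \<sigma> x * (\<chi>2 x / \<chi>1 x)) = k - 1"
    using cond_mult_eq_max[OF is_char_if_in_charX[OF \<sigma>(1)] is_char_divide[OF char2 char1]]
      \<sigma>(2) c12 cond_divide_commute[of \<chi>2 \<chi>1] by simp
  then show ?thesis using \<mu> by auto
qed

lemma resq_2_cond_twists_k_2:
  assumes q: "resq v = 2" and k2: "k = 2" and \<mu>: "\<mu> \<in> charX v \<pi>" "cond v \<mu> = 2"
  shows "cond v (\<lambda>x. \<mu> x * \<chi>1 x) = 0 \<and> cond v (\<lambda>x. \<mu> x * \<chi>2 x) = 0"
  using resq_2_cond_mult_eq_0[OF q is_char_if_in_charX[OF \<mu>(1)] \<mu>(2)] char1 char2 cond1 cond2 k2
  by simp

lemma resq_2_k_ge_3: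
  assumes q: "resq v = 2" and c12: "cond v (\<lambda>x. \<chi>1 x / \<chi>2 x) = k - 1"
  shows "3 \<le> k"
  using resq_2_cond_ne_1[OF q is_char_divide[OF char1 char2]] c12 k by linarith

lemma resq_2_cond_twist_le_pred:
  assumes q: "resq v = 2" and \<mu>: "\<mu> \<in> charX v \<pi>" "cond v \<mu> = k"
  shows "cond v (\<lambda>x. \<mu> x * \<chi>1 x) \<le> k - 1" "cond v (\<lambda>x. \<mu> x * \<chi>2 x) \<le> k - 1"
  using resq_2_cond_mult_le[OF q _ is_char_if_in_charX[OF \<mu>(1)] _ char1, of "k - 1"]
    resq_2_cond_mult_le[OF q _ is_char_if_in_charX[OF \<mu>(1)] _ char2, of "k - 1"] \<mu>(2) cond1 cond2 k
  by simp_all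

text \<open>If both twists dropped to conductor \<open>k - 1\<close>, their quotient \<open>\<chi>\<^sub>1 / \<chi>\<^sub>2\<close> would drop one level further.\<close>

lemma resq_2_not_both_cond_pred:
  assumes q: "resq v = 2" and c12: "cond v (\<lambda>x. \<chi>1 x / \<chi>2 x) = k - 1" and k3: "3 \<le> k"
    and \<mu>: "\<mu> \<in> charX v \<pi>"
  shows "\<not> (cond v (\<lambda>x. \<mu> x * \<chi>1 x) = k - 1 \<and> cond v (\<lambda>x. \<mu> x * \<chi>2 x) = k - 1)"
proof
  assume both: "cond v (\<lambda>x. \<mu> x * \<chi>1 x) = k - 1 \<and> cond v (\<lambda>x. \<mu> x * \<chi>2 x) = k - 1"
  have m: "is_char v \<mu>" using is_char_if_in_charX[OF \<mu>] .
  have "cond v (\<lambda>x. (\<mu> x * \<chi>1 x) * inverse (\<mu> x * \<chi>2 x)) \<le> k - 2"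
    using resq_2_cond_mult_le[OF q _ is_char_mult[OF m char1] _
        is_char_inverse[OF is_char_mult[OF m char2]], of "k - 2"]
      both cond_inverse[of "\<lambda>x. \<mu> x * \<chi>2 x"] k3 by (simp add: Suc_diff_Suc numeral_2_eq_2)
  then show False
    using cond_twist_ratio[OF \<mu>] c12 k3 by (simp add: divide_inverse)
qed

lemma resq_2_max_cond_sum:
  assumes q: "resq v = 2" and c12: "cond v (\<lambda>x. \<chi>1 x / \<chi>2 x) = k - 1" and k4: "4 \<le> k"
  shows "Max {cond v (\<lambda>x. \<mu> x * \<chi>1 x) + cond v (\<lambda>x. \<mu> x * \<chi>2 x) | \<mu>. \<mu> \<in> charX' v \<pi> k}
    = 2 * k - 3"
proof (rule Max_eq_if_attained)
  fix s assume "s \<in> {cond v (\<lambda>x. \<mu> x * \<chi>1 x) + cond v (\<lambda>x. \<mu> x * \<chi>2 x) | \<mu>. \<mu> \<in> charX' v \<pi> k}"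
  then obtain \<mu> where \<mu>: "\<mu> \<in> charX v \<pi>" "cond v \<mu> = k"
    and s: "s = cond v (\<lambda>x. \<mu> x * \<chi>1 x) + cond v (\<lambda>x. \<mu> x * \<chi>2 x)"
    unfolding charX'_def by blast
  show "s \<le> 2 * k - 3"
    using resq_2_cond_twist_le_pred[OF q \<mu>] resq_2_not_both_cond_pred[OF q c12 _ \<mu>(1)] s k4
    by linarith
next
  have "k - 2 \<noteq> 1 \<or> 3 \<le> resq v" using k4 by linarith
  then obtain \<sigma> where \<sigma>: "\<sigma> \<in> charX v \<pi>" "cond v \<sigma> = k - 2"
    by (rule exists_charX_cond)
  obtain \<mu> where \<mu>: "\<mu> \<in> charX v \<pi>" "cond v \<mu> = k" "cond v (\<lambda>x. \<mu> x * \<chi>2 x) = k - 2"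
    "cond v (\<lambda>x. \<mu> x * \<chi>1 x) = cond v (\<lambda>x. \<sigma> x * (\<chi>1 x / \<chi>2 x))"
    using exists_twist_with_conds[OF \<sigma>(1) char2 _ char1] \<sigma>(2) cond2 k4 by auto
  have "cond v (\<lambda>x. \<sigma> x * (\<chi>1 x / \<chi>2 x)) = k - 1"
    using cond_mult_eq_max[OF is_char_if_in_charX[OF \<sigma>(1)] is_char_divide[OF char1 char2]]
      \<sigma>(2) c12 k4 by simp
  then have "(k - 1) + (k - 2) \<in> {cond v (\<lambda>x. \<mu> x * \<chi>1 x) + cond v (\<lambda>x. \<mu> x * \<chi>2 x) | \<mu>. \<mu> \<in> charX' v \<pi> k}"
    using \<mu> unfolding charX'_def by force
  moreover have "2 * k - 3 = (k - 1) + (k - 2)" using k4 by simp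
  ultimately show "2 * k - 3 \<in> {cond v (\<lambda>x. \<mu> x * \<chi>1 x) + cond v (\<lambda>x. \<mu> x * \<chi>2 x) | \<mu>. \<mu> \<in> charX' v \<pi> k}"
    by (simp only:)
qed

lemma resq_2_cond_twists_k_3:
  assumes q: "resq v = 2" and c12: "cond v (\<lambda>x. \<chi>1 x / \<chi>2 x) = k - 1" and k3: "k = 3"
    and \<mu>: "\<mu> \<in> charX v \<pi>" "cond v \<mu> = 3"
  shows "{cond v (\<lambda>x. \<mu> x * \<chi>1 x), cond v (\<lambda>x. \<mu> x * \<chi>2 x)} = {2, 0}"
proof -
  have m: "is_char v \<mu>" using is_char_if_in_charX[OF \<mu>(1)] .
  have le: "cond v (\<lambda>x. \<mu> x * \<chi>1 x) \<le> 2" "cond v (\<lambda>x. \<mu> x * \<chi>2 x) \<le> 2"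
    using resq_2_cond_twist_le_pred[OF q \<mu>(1)] \<mu>(2) k3 by simp_all
  have ne1: "cond v (\<lambda>x. \<mu> x * \<chi>1 x) \<noteq> 1" "cond v (\<lambda>x. \<mu> x * \<chi>2 x) \<noteq> 1"
    using resq_2_cond_ne_1[OF q] is_char_mult[OF m] char1 char2 by blast+
  have "\<not> (cond v (\<lambda>x. \<mu> x * \<chi>1 x) = 2 \<and> cond v (\<lambda>x. \<mu> x * \<chi>2 x) = 2)"
    using resq_2_not_both_cond_pred[OF q c12 _ \<mu>(1)] k3 by simp
  moreover have "\<not> (cond v (\<lambda>x. \<mu> x * \<chi>1 x) = 0 \<and> cond v (\<lambda>x. \<mu> x * \<chi>2 x) = 0)"
  proof
    assume "cond v (\<lambda>x. \<mu> x * \<chi>1 x) = 0 \<and> cond v (\<lambda>x. \<mu> x * \<chi>2 x) = 0"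
    then have "cond v (\<lambda>x. (\<mu> x * \<chi>1 x) * inverse (\<mu> x * \<chi>2 x)) = 0"
      using cond_mult_le[OF is_char_mult[OF m char1] is_char_inverse[OF is_char_mult[OF m char2]]]
        cond_inverse[of "\<lambda>x. \<mu> x * \<chi>2 x"] by simp
    then show False using cond_twist_ratio[OF \<mu>(1)] c12 k3 by (simp add: divide_inverse)
  qed
  ultimately show ?thesis using le ne1 by auto
qed

lemma resq_2_twists_if_ratio_cond_lt:
  assumes q: "resq v = 2" and c12: "cond v (\<lambda>x. \<chi>1 x / \<chi>2 x) < k - 1"
  shows "(2 < k \<longrightarrow> (\<exists>\<mu>\<in>charX v \<pi>. cond v \<mu> = k \<and> cond v (\<lambda>x. \<mu> x * \<chi>1 x) = k - 1
                         \<and> cond v (\<lambda>x. \<mu> x * \<chi>2 x) = k - 1)) \<and>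
      (k = 2 \<longrightarrow> (\<forall>\<mu>\<in>charX v \<pi>. cond v \<mu> = 2 \<longrightarrow>
                         cond v (\<lambda>x. \<mu> x * \<chi>1 x) = 0 \<and> cond v (\<lambda>x. \<mu> x * \<chi>2 x) = 0))"
  using resq_2_exists_twist_cond_pred[OF q c12] resq_2_cond_twists_k_2[OF q] by simp

lemma resq_2_twists_if_ratio_cond_pred:
  assumes q: "resq v = 2" and c12: "cond v (\<lambda>x. \<chi>1 x / \<chi>2 x) = k - 1"
  shows "3 \<le> k \<and>
      (4 \<le> k \<longrightarrow> Max {cond v (\<lambda>x. \<mu> x * \<chi>1 x) + cond v (\<lambda>x. \<mu> x * \<chi>2 x) | \<mu>. \<mu> \<in> charX' v \<pi> k}
                    = 2 * k - 3) \<and>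
      (k = 3 \<longrightarrow> (\<forall>\<mu>\<in>charX v \<pi>. cond v \<mu> = 3 \<longrightarrow>
          {cond v (\<lambda>x. \<mu> x * \<chi>1 x), cond v (\<lambda>x. \<mu> x * \<chi>2 x)} = {2, 0}))"
  using resq_2_k_ge_3[OF q c12] resq_2_max_cond_sum[OF q c12] resq_2_cond_twists_k_3[OF q c12]
  by simp

end

theorem lemma2p2:
  fixes v :: "'a::field_char_0 \<Rightarrow> int" and \<pi> :: 'a
    and \<chi>1 \<chi>2 :: "'a \<Rightarrow> complex" and k :: nat
  assumes "local_field v" and "\<pi> \<noteq> 0" and "v \<pi> = 1"
    and "is_char v \<chi>1" and "is_char v \<chi>2"
    and "k \<ge> 2" and "cond v \<chi>1 = k" and "cond v \<chi>2 = k"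
  shows
   "((resq v > 3 \<or> (resq v = 3 \<and> cond v (\<lambda>x. \<chi>1 x / \<chi>2 x) < k)) \<longrightarrow>
      (\<exists>\<mu>\<in>charX v \<pi>. cond v \<mu> = k \<and> cond v (\<lambda>x. \<mu> x * \<chi>1 x) = k
                         \<and> cond v (\<lambda>x. \<mu> x * \<chi>2 x) = k)) \<and>
   ((resq v = 3 \<and> cond v (\<lambda>x. \<chi>1 x / \<chi>2 x) = k) \<longrightarrow>
      Max {cond v (\<lambda>x. \<mu> x * \<chi>1 x) + cond v (\<lambda>x. \<mu> x * \<chi>2 x) | \<mu>. \<mu> \<in> charX' v \<pi> k}
        = 2 * k - 1) \<and>
   ((resq v = 2 \<and> cond v (\<lambda>x. \<chi>1 x / \<chi>2 x) < k - 1) \<longrightarrow>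
      (k > 2 \<longrightarrow> (\<exists>\<mu>\<in>charX v \<pi>. cond v \<mu> = k \<and> cond v (\<lambda>x. \<mu> x * \<chi>1 x) = k - 1
                         \<and> cond v (\<lambda>x. \<mu> x * \<chi>2 x) = k - 1)) \<and>
      (k = 2 \<longrightarrow> (\<forall>\<mu>\<in>charX v \<pi>. cond v \<mu> = 2 \<longrightarrow>
                         cond v (\<lambda>x. \<mu> x * \<chi>1 x) = 0 \<and> cond v (\<lambda>x. \<mu> x * \<chi>2 x) = 0))) \<and>
   ((resq v = 2 \<and> cond v (\<lambda>x. \<chi>1 x / \<chi>2 x) = k - 1) \<longrightarrow>
      k \<ge> 3 \<and>
      (k \<ge> 4 \<longrightarrow> Max {cond v (\<lambda>x. \<mu> x * \<chi>1 x) + cond v (\<lambda>x. \<mu> x * \<chi>2 x) | \<mu>. \<mu> \<in> charX' v \<pi> k}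
                    = 2 * k - 3) \<and>
      (k = 3 \<longrightarrow> (\<forall>\<mu>\<in>charX v \<pi>. cond v \<mu> = 3 \<longrightarrow>
          {cond v (\<lambda>x. \<mu> x * \<chi>1 x), cond v (\<lambda>x. \<mu> x * \<chi>2 x)} = {2, 0})))"
proof -
  interpret char_pair v \<pi> \<chi>1 \<chi>2 k
    using assms by unfold_locales
  show ?thesis
    by (intro conjI impI[OF exists_twist_all_cond_k] impI[OF resq_3_max_cond_sum[OF conjunct1 conjunct2]]
        impI[OF resq_2_twists_if_ratio_cond_lt[OF conjunct1 conjunct2]]
        impI[OF resq_2_twists_if_ratio_cond_pred[OF conjunct1 conjunct2]]) simp_all
qed

end
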